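(* Let $\mathcal A_1,\mathcal B_1:U_1\to V_1$ be linear maps of finite-dimensional vector spaces over a field $\mathbb F$. Let $U_2=\mathcal A_1^{-1}(\operatorname{im}\mathcal B_1)$, $V_2=\operatorname{im}\mathcal B_1$, and let $\mathcal A_2,\mathcal B_2:U_2\to V_2$ be the restrictions of $\mathcal A_1,\mathcal B_1$. Similarly let $U_3=\mathcal A_2^{-1}(\operatorname{im}\mathcal B_2)$, $V_3=\operatorname{im}\mathcal B_2$. Let $(A_1,B_1)$ and $(A_2,B_2)$ be the matrix pairs of $(\mathcal A_1,\mathcal B_1)$ and $(\mathcal A_2,\mathcal B_2)$ in arbitrary bases, and take any regularizing decomposition of $(A_1,B_1)$. Then a regularizing decomposition of $(A_2,B_2)$ is obtained from it by: deleting all summands $(L_1^T,R_1^T)=(0_{10},0_{10})$ and all summands $(I_1,J_1(0))=([1],[0])$; replacing each summand $(L_k^T,R_k^T)$ with $k\ge2$ by $(L_{k-1}^T,R_{k-1}^T)$ and each summand $(I_k,J_k(0))$ with $k\ge2$ by $(I_{k-1},J_{k-1}(0))$; and leaving all other summands (the regular part $(I_r,D)$ and the summands $(J_k(0),I_k)$, $(L_k,R_k)$) unchanged. Moreover, the number of summands $(L_1^T,R_1^T)$ in the decomposition of $(A_1,B_1)$ equals $(\dim V_1-\dim V_2)-(\dim U_1-\dim U_2)$, and the number of summands $(I_1,J_1(0))$ equals $(\dim U_1-\dim U_2)-(\dim V_2-\dim V_3)$.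
   Context: $J_k(0)$ denotes the $k\times k$ nilpotent Jordan block with ones directly below the diagonal. $L_k$ and $R_k$ are the $(k-1)\times k$ matrices obtained from $I_k$ by deleting its last row, respectively its first row ($L_1=R_1$ is the $0\times1$ matrix, $L_1^T=R_1^T=0_{10}$ the $1\times 0$ matrix). Direct sums of matrix pairs are blockwise. Two matrix pairs $(A,B)$, $(A',B')$ are equivalent if $SA=A'R$, $SB=B'R$ for nonsingular $S,R$. A regularizing decomposition of a matrix pair $(A,B)$ is a direct sum $(I_r,D)\oplus(M_1,N_1)\oplus\dots\oplus(M_t,N_t)$ equivalent to $(A,B)$, in which $D$ is $r\times r$ nonsingular and each $(M_i,N_i)$ is one of $(I_k,J_k(0))$, $(J_k(0),I_k)$, $(L_k,R_k)$, $(L_k^T,R_k^T)$, $k\ge1$. *)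

theory Defs
  imports "Jordan_Normal_Form.Matrix"
begin

definition jordan0 :: "nat \<Rightarrow> 'a::field mat" where
  "jordan0 k = mat k k (\<lambda>(i,j). if i = j + 1 then 1 else 0)"

text \<open>L_k: I_k with last row deleted; R_k: I_k with first row deleted ((k-1) x k).\<close>
definition Lmat :: "nat \<Rightarrow> 'a::field mat" where
  "Lmat k = mat (k - 1) k (\<lambda>(i,j). if j = i then 1 else 0)"

definition Rmat :: "nat \<Rightarrow> 'a::field mat" where
  "Rmat k = mat (k - 1) k (\<lambda>(i,j). if j = i + 1 then 1 else 0)"

datatype summand =
    IJ nat
  | JI nat
  | LR nat
  | LRT nat

fun summand_index :: "summand \<Rightarrow> nat" where
  "summand_index (IJ k) = k"
| "summand_index (JI k) = k"
| "summand_index (LR k) = k"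
| "summand_index (LRT k) = k"

fun summand_pair :: "summand \<Rightarrow> 'a::field mat \<times> 'a mat" where
  "summand_pair (IJ k) = (1\<^sub>m k, jordan0 k)"
| "summand_pair (JI k) = (jordan0 k, 1\<^sub>m k)"
| "summand_pair (LR k) = (Lmat k, Rmat k)"
| "summand_pair (LRT k) = (transpose_mat (Lmat k), transpose_mat (Rmat k))"

definition dsum_mat :: "'a::field mat \<Rightarrow> 'a mat \<Rightarrow> 'a mat" where
  "dsum_mat A B = four_block_mat A (0\<^sub>m (dim_row A) (dim_col B)) (0\<^sub>m (dim_row B) (dim_col A)) B"

definition dsum_pair :: "'a::field mat \<times> 'a mat \<Rightarrow> 'a mat \<times> 'a mat \<Rightarrow> 'a mat \<times> 'a mat" where
  "dsum_pair P Q = (dsum_mat (fst P) (fst Q), dsum_mat (snd P) (snd Q))"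

definition decomp_pair :: "nat \<Rightarrow> 'a::field mat \<Rightarrow> summand list \<Rightarrow> 'a mat \<times> 'a mat" where
  "decomp_pair r D bs = foldl (\<lambda>P b. dsum_pair P (summand_pair b)) (1\<^sub>m r, D) bs"

definition pair_equiv :: "'a::field mat \<times> 'a mat \<Rightarrow> 'a mat \<times> 'a mat \<Rightarrow> bool" where
  "pair_equiv P P' \<longleftrightarrow>
     (let m = dim_row (fst P); n = dim_col (fst P) in
       snd P \<in> carrier_mat m n \<and> fst P' \<in> carrier_mat m n \<and> snd P' \<in> carrier_mat m n \<and>
       (\<exists>S R. S \<in> carrier_mat m m \<and> R \<in> carrier_mat n n \<and>
              invertible_mat S \<and> invertible_mat R \<and>
              S * fst P = fst P' * R \<and> S * snd P = snd P' * R))"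

definition regularizing_decomp :: "'a::field mat \<times> 'a mat \<Rightarrow> nat \<Rightarrow> 'a mat \<Rightarrow> summand list \<Rightarrow> bool" where
  "regularizing_decomp P r D bs \<longleftrightarrow>
     D \<in> carrier_mat r r \<and> invertible_mat D \<and>
     (\<forall>b \<in> set bs. summand_index b \<ge> 1) \<and>
     pair_equiv P (decomp_pair r D bs)"

fun reduce_summand :: "summand \<Rightarrow> summand list" where
  "reduce_summand (LRT k) = (if k \<le> 1 then [] else [LRT (k - 1)])"
| "reduce_summand (IJ k) = (if k \<le> 1 then [] else [IJ (k - 1)])"
| "reduce_summand b = [b]"

definition reduce_summands :: "summand list \<Rightarrow> summand list" where
  "reduce_summands bs = concat (map reduce_summand bs)"

definition basis_matrix :: "nat \<Rightarrow> 'a::field vec set \<Rightarrow> 'a mat \<Rightarrow> bool" where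
  "basis_matrix n W M \<longleftrightarrow> M \<in> carrier_mat n (dim_col M) \<and>
     (\<forall>x \<in> carrier_vec (dim_col M). M *\<^sub>v x = 0\<^sub>v n \<longrightarrow> x = 0\<^sub>v (dim_col M)) \<and>
     (\<lambda>x. M *\<^sub>v x) ` carrier_vec (dim_col M) = W"

end

theory Submission
  imports Defs "Jordan_Normal_Form.Determinant"
begin

text \<open>The passage from \<open>(A\<^sub>1, B\<^sub>1)\<close> to \<open>(A\<^sub>2, B\<^sub>2)\<close> commutes with equivalence of pairs and
  with block direct sums, and the dimensions of \<open>U\<^sub>2, V\<^sub>2, V\<^sub>3\<close> are invariants of the pair. So it
  can be carried out summand by summand in a regularizing decomposition. For \<open>(I\<^sub>r, D)\<close>,
  \<open>(J\<^sub>k(0), I\<^sub>k)\<close> and \<open>(L\<^sub>k, R\<^sub>k)\<close> the map \<open>B\<close> is surjective and nothing changes. For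
  \<open>(I\<^sub>k, J\<^sub>k(0))\<close> and \<open>(L\<^sub>k\<^sup>T, R\<^sub>k\<^sup>T)\<close> the image of \<open>B\<close> consists of the vectors with vanishing first
  coordinate, it has the basis given by the columns of \<open>R\<^sub>k\<^sup>T\<close>, and in this basis the restriction is the
  summand of the same kind of size \<open>k - 1\<close> (a \<open>0 \<times> 0\<close> pair when \<open>k = 1\<close>). Adding up the dimension
  defects summand by summand, only \<open>(L\<^sub>1\<^sup>T, R\<^sub>1\<^sup>T)\<close> contributes to the first counting formula and
  only \<open>(I\<^sub>1, J\<^sub>1(0))\<close> to the second.\<close>

lemma invertible_mat_obtain_inverse:
  fixes S :: "'a::field mat"
  assumes "S \<in> carrier_mat n n" "invertible_mat S"
  obtains Si where "Si \<in> carrier_mat n n" "S * Si = 1\<^sub>m n" "Si * S = 1\<^sub>m n"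
proof -
  obtain B where B: "S * B = 1\<^sub>m (dim_row S)" "B * S = 1\<^sub>m (dim_row B)"
    using assms(2) unfolding invertible_mat_def inverts_mat_def by blast
  have "dim_col B = n" "dim_row B = n"
    using assms(1) arg_cong[OF B(1), of dim_col] arg_cong[OF B(2), of dim_col] by auto
  then show thesis using that[of B] assms(1) B by auto
qed

lemma invertible_matI:
  fixes S :: "'a::field mat"
  assumes "S \<in> carrier_mat n n" "Si \<in> carrier_mat n n" "S * Si = 1\<^sub>m n"
  shows "invertible_mat S"
proof -
  have "Si * S = 1\<^sub>m n" using mat_mult_left_right_inverse[OF assms] .
  then show ?thesis
    using assms unfolding invertible_mat_def inverts_mat_def carrier_mat_def by auto
qed

lemma invertible_mat_inverse:
  fixes S :: "'a::field mat"
  assumes "S \<in> carrier_mat n n" "Si \<in> carrier_mat n n" "S * Si = 1\<^sub>m n"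
  shows "invertible_mat Si"
  using invertible_matI[OF assms(2,1)] mat_mult_left_right_inverse[OF assms] .

lemma invertible_mat_mult:
  fixes S T :: "'a::field mat"
  assumes S: "S \<in> carrier_mat n n" "invertible_mat S" and T: "T \<in> carrier_mat n n" "invertible_mat T"
  shows "invertible_mat (S * T)"
proof -
  obtain Si where Si: "Si \<in> carrier_mat n n" "S * Si = 1\<^sub>m n"
    using invertible_mat_obtain_inverse[OF S] by blast
  obtain Ti where Ti: "Ti \<in> carrier_mat n n" "T * Ti = 1\<^sub>m n"
    using invertible_mat_obtain_inverse[OF T] by blast
  have "(S * T) * (Ti * Si) = S * ((T * Ti) * Si)"
    using S(1) T(1) Ti(1) Si(1) by (simp add: assoc_mult_mat[of _ n n _ n _ n])
  also have "\<dots> = 1\<^sub>m n" using Ti(2) Si by simp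
  finally show ?thesis using S(1) T(1) Ti(1) Si(1) by (intro invertible_matI) auto
qed

lemma mult_eq_mult_inverses:
  fixes S A A' R :: "'a::field mat"
  assumes "S \<in> carrier_mat m m" "Si \<in> carrier_mat m m" "Si * S = 1\<^sub>m m"
    and "R \<in> carrier_mat n n" "Ri \<in> carrier_mat n n" "R * Ri = 1\<^sub>m n"
    and "A \<in> carrier_mat m n" "A' \<in> carrier_mat m n" and "S * A = A' * R"
  shows "Si * A' = A * Ri"
proof -
  have "A * Ri = ((Si * S) * A) * Ri" using assms by simp
  also have "\<dots> = Si * ((S * A) * Ri)"
    using assoc_mult_mat[OF assms(2,1,7)] assoc_mult_mat[OF assms(2) mult_carrier_mat[OF assms(1,7)] assms(5)]
    by simp
  also have "\<dots> = Si * (A' * (R * Ri))" using assms by (simp add: assoc_mult_mat[of A' m n R n Ri n])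
  also have "\<dots> = Si * A'" using assms by simp
  finally show ?thesis by (rule sym)
qed

lemma pair_equivI:
  fixes A B A' B' S R :: "'a::field mat"
  assumes "A \<in> carrier_mat m n" "B \<in> carrier_mat m n" "A' \<in> carrier_mat m n" "B' \<in> carrier_mat m n"
    and "S \<in> carrier_mat m m" "invertible_mat S" "R \<in> carrier_mat n n" "invertible_mat R"
    and "S * A = A' * R" "S * B = B' * R"
  shows "pair_equiv (A, B) (A', B')"
  using assms unfolding pair_equiv_def Let_def by auto

lemma pair_equivE:
  fixes A B A' B' :: "'a::field mat"
  assumes "pair_equiv (A, B) (A', B')" "A \<in> carrier_mat m n"
  obtains S R where "B \<in> carrier_mat m n" "A' \<in> carrier_mat m n" "B' \<in> carrier_mat m n"
    "S \<in> carrier_mat m m" "invertible_mat S" "R \<in> carrier_mat n n" "invertible_mat R"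
    "S * A = A' * R" "S * B = B' * R"
  using assms unfolding pair_equiv_def Let_def by auto

lemma pair_equiv_sym:
  fixes A B A' B' :: "'a::field mat"
  assumes e: "pair_equiv (A, B) (A', B')" and A: "A \<in> carrier_mat m n"
  shows "pair_equiv (A', B') (A, B)"
proof -
  obtain S R where c: "B \<in> carrier_mat m n" "A' \<in> carrier_mat m n" "B' \<in> carrier_mat m n"
    and S: "S \<in> carrier_mat m m" "invertible_mat S" and R: "R \<in> carrier_mat n n" "invertible_mat R"
    and eq: "S * A = A' * R" "S * B = B' * R"
    using pair_equivE[OF e A] .
  obtain Si where Si: "Si \<in> carrier_mat m m" "S * Si = 1\<^sub>m m" "Si * S = 1\<^sub>m m"
    using invertible_mat_obtain_inverse[OF S] .
  obtain Ri where Ri: "Ri \<in> carrier_mat n n" "R * Ri = 1\<^sub>m n" "Ri * R = 1\<^sub>m n"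
    using invertible_mat_obtain_inverse[OF R] .
  show ?thesis
    by (rule pair_equivI[OF c(2,3) A c(1) Si(1) invertible_mat_inverse[OF S(1) Si(1,2)]
          Ri(1) invertible_mat_inverse[OF R(1) Ri(1,2)]
          mult_eq_mult_inverses[OF S(1) Si(1,3) R(1) Ri(1,2) A c(2) eq(1)]
          mult_eq_mult_inverses[OF S(1) Si(1,3) R(1) Ri(1,2) c(1) c(3) eq(2)]])
qed

lemma pair_equiv_trans:
  fixes A B A' B' A'' B'' :: "'a::field mat"
  assumes e1: "pair_equiv (A, B) (A', B')" and e2: "pair_equiv (A', B') (A'', B'')"
    and A: "A \<in> carrier_mat m n"
  shows "pair_equiv (A, B) (A'', B'')"
proof -
  obtain S R where c: "B \<in> carrier_mat m n" "A' \<in> carrier_mat m n" "B' \<in> carrier_mat m n"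
    and S: "S \<in> carrier_mat m m" "invertible_mat S" and R: "R \<in> carrier_mat n n" "invertible_mat R"
    and eq: "S * A = A' * R" "S * B = B' * R"
    using pair_equivE[OF e1 A] .
  obtain S' R' where c': "A'' \<in> carrier_mat m n" "B'' \<in> carrier_mat m n"
    and S': "S' \<in> carrier_mat m m" "invertible_mat S'" and R': "R' \<in> carrier_mat n n" "invertible_mat R'"
    and eq': "S' * A' = A'' * R'" "S' * B' = B'' * R'"
    using pair_equivE[OF e2 c(2)] by metis
  have chain: "(S' * S) * C = C'' * (R' * R)"
    if "C \<in> carrier_mat m n" "C' \<in> carrier_mat m n" "C'' \<in> carrier_mat m n"
      "S * C = C' * R" "S' * C' = C'' * R'" for C C' C''
  proof -
    have "(S' * S) * C = S' * (C' * R)" using that S' S by (simp add: assoc_mult_mat[of S' m m S m C n])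
    also have "\<dots> = (C'' * R') * R" using that S' R by (simp add: assoc_mult_mat[of S' m m C' n R n, symmetric])
    also have "\<dots> = C'' * (R' * R)" using that R' R by (simp add: assoc_mult_mat[of C'' m n R' n R n])
    finally show ?thesis .
  qed
  show ?thesis
    using A c c' S R S' R' chain[OF A c(2) c'(1) eq(1) eq'(1)] chain[OF c(1) c(3) c'(2) eq(2) eq'(2)]
    by (intro pair_equivI[where S = "S' * S" and R = "R' * R"] invertible_mat_mult) auto
qed

section \<open>Matrices whose columns form a basis of a subspace\<close>

lemma basis_matrix_carrier: "basis_matrix n W M \<Longrightarrow> M \<in> carrier_mat n (dim_col M)"
  unfolding basis_matrix_def by auto

lemma basis_matrix_mult_vec: "basis_matrix n W M \<Longrightarrow> x \<in> carrier_vec (dim_col M) \<Longrightarrow> M *\<^sub>v x \<in> W"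
  unfolding basis_matrix_def by blast

lemma basis_matrix_col:
  fixes M :: "'a::field mat"
  assumes M: "basis_matrix n W M" and j: "j < dim_col M"
  shows "col M j \<in> W"
proof -
  have "col M j = col (M * 1\<^sub>m (dim_col M)) j" by simp
  also have "\<dots> = M *\<^sub>v col (1\<^sub>m (dim_col M)) j"
    by (rule col_mult2[OF basis_matrix_carrier[OF M] one_carrier_mat j])
  also have "\<dots> = M *\<^sub>v unit_vec (dim_col M) j" using j by simp
  finally show ?thesis using basis_matrix_mult_vec[OF M unit_vec_carrier] by simp
qed

lemma basis_matrix_inj:
  fixes M :: "'a::field mat"
  assumes M: "basis_matrix n W M" and x: "x \<in> carrier_vec (dim_col M)" and y: "y \<in> carrier_vec (dim_col M)"
    and eq: "M *\<^sub>v x = M *\<^sub>v y"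
  shows "x = y"
proof -
  have Mc: "M \<in> carrier_mat n (dim_col M)" using M by (rule basis_matrix_carrier)
  have "M *\<^sub>v (x - y) = M *\<^sub>v x - M *\<^sub>v y" using Mc x y by (rule mult_minus_distrib_mat_vec)
  also have "\<dots> = 0\<^sub>v n" unfolding eq by (rule minus_cancel_vec, rule mult_mat_vec_carrier[OF Mc y])
  finally have "M *\<^sub>v (x - y) = 0\<^sub>v n" .
  moreover have "x - y \<in> carrier_vec (dim_col M)" using x y by simp
  ultimately have diff: "x - y = 0\<^sub>v (dim_col M)" using M unfolding basis_matrix_def by blast
  show ?thesis
  proof (rule eq_vecI)
    fix i assume i: "i < dim_vec y"
    have "(x - y) $ i = 0" unfolding diff using i y by simp
    then show "x $ i = y $ i" using i x y by simp
  qed (use x y in simp)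
qed

lemma basis_matrix_cancel:
  fixes M :: "'a::field mat"
  assumes M: "basis_matrix n W M" and X: "X \<in> carrier_mat (dim_col M) k" and Y: "Y \<in> carrier_mat (dim_col M) k"
    and eq: "M * X = M * Y"
  shows "X = Y"
proof (rule mat_col_eqI)
  fix j assume "j < dim_col Y"
  then have j: "j < k" using Y by simp
  have Mc: "M \<in> carrier_mat n (dim_col M)" using M by (rule basis_matrix_carrier)
  have "M *\<^sub>v col X j = M *\<^sub>v col Y j"
    using arg_cong[OF eq, of "\<lambda>N. col N j"] col_mult2[OF Mc X j] col_mult2[OF Mc Y j] by simp
  then show "col X j = col Y j" using basis_matrix_inj[OF M] X Y j by auto
qed (use X Y in auto)

lemma basis_matrix_factor:
  fixes M N :: "'a::field mat"
  assumes M: "basis_matrix n W M" and N: "N \<in> carrier_mat n k" and cols: "\<And>j. j < k \<Longrightarrow> col N j \<in> W"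
  obtains X where "X \<in> carrier_mat (dim_col M) k" "N = M * X"
proof -
  have Mc: "M \<in> carrier_mat n (dim_col M)" using M by (rule basis_matrix_carrier)
  have W: "W = (\<lambda>x. M *\<^sub>v x) ` carrier_vec (dim_col M)" using M unfolding basis_matrix_def by blast
  define xs where "xs = (\<lambda>j. SOME x. x \<in> carrier_vec (dim_col M) \<and> M *\<^sub>v x = col N j)"
  have xs: "xs j \<in> carrier_vec (dim_col M) \<and> M *\<^sub>v xs j = col N j" if j: "j < k" for j
  proof -
    obtain x where "x \<in> carrier_vec (dim_col M)" "M *\<^sub>v x = col N j" using cols[OF j] W by auto
    then show ?thesis unfolding xs_def by (rule someI[of _ x, OF conjI])
  qed
  define X where "X = mat_of_cols (dim_col M) (map xs [0..<k])"
  have X: "X \<in> carrier_mat (dim_col M) k"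
    unfolding X_def using mat_of_cols_carrier(1)[of "dim_col M" "map xs [0..<k]"] by simp
  have "N = M * X"
  proof (rule mat_col_eqI)
    fix j assume "j < dim_col (M * X)"
    then have j: "j < k" using X by simp
    have "col X j = xs j" unfolding X_def using j xs[OF j] by (subst col_mat_of_cols) auto
    then show "col N j = col (M * X) j" using col_mult2[OF Mc X j] xs[OF j] by simp
  next
    show "dim_row N = dim_row (M * X)" using Mc N by simp
    show "dim_col N = dim_col (M * X)" using X N by simp
  qed
  then show thesis using that X by blast
qed

lemma mat_left_inverse_dim_le:
  fixes X Y :: "'a::field mat"
  assumes X: "X \<in> carrier_mat d e" and Y: "Y \<in> carrier_mat e d" and YX: "Y * X = 1\<^sub>m e"
  shows "e \<le> d"
proof (rule ccontr)
  assume "\<not> e \<le> d"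
  then have lt: "d < e" by simp
  \<comment> \<open>pad \<open>X\<close> with zero rows and \<open>Y\<close> with zero columns: the padded \<open>X\<close> would be invertible
    but has a zero last row\<close>
  define X' where "X' = four_block_mat X (0\<^sub>m d 0) (0\<^sub>m (e - d) e) (0\<^sub>m (e - d) 0)"
  define Y' where "Y' = four_block_mat Y (0\<^sub>m e (e - d)) (0\<^sub>m 0 d) (0\<^sub>m 0 (e - d))"
  have X': "X' \<in> carrier_mat e e" and Y': "Y' \<in> carrier_mat e e"
    unfolding X'_def Y'_def using X Y lt by auto
  have "Y' * X' = four_block_mat (Y * X + 0\<^sub>m e (e - d) * 0\<^sub>m (e - d) e) (Y * 0\<^sub>m d 0 + 0\<^sub>m e (e - d) * 0\<^sub>m (e - d) 0)
    (0\<^sub>m 0 d * X + 0\<^sub>m 0 (e - d) * 0\<^sub>m (e - d) e) (0\<^sub>m 0 d * 0\<^sub>m d 0 + 0\<^sub>m 0 (e - d) * 0\<^sub>m (e - d) 0)"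
    unfolding X'_def Y'_def by (rule mult_four_block_mat) (use X Y in auto)
  also have "\<dots> = 1\<^sub>m e" by (rule eq_matI) (use X Y YX lt in auto)
  finally have "X' * Y' = 1\<^sub>m e" using X' Y' by (metis mat_mult_left_right_inverse)
  moreover have "(X' * Y') $$ (e - 1, e - 1) = row X' (e - 1) \<bullet> col Y' (e - 1)"
    using X' Y' lt by (intro index_mult_mat(1)) auto
  moreover have "row X' (e - 1) = 0\<^sub>v e" unfolding X'_def using X lt by (intro eq_vecI) auto
  moreover have "0\<^sub>v e \<bullet> col Y' (e - 1) = 0" using Y' by (intro scalar_prod_left_zero) auto
  ultimately show False using lt by simp
qed

lemma basis_matrix_change:
  fixes M N :: "'a::field mat"
  assumes M: "basis_matrix n W M" and N: "basis_matrix n W N" and dM: "dim_col M = d" and dN: "dim_col N = d'"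
  obtains X where "X \<in> carrier_mat d d" "invertible_mat X" "N = M * X" "d' = d"
proof -
  have Mc: "M \<in> carrier_mat n (dim_col M)" using M by (rule basis_matrix_carrier)
  have Nc: "N \<in> carrier_mat n (dim_col N)" using N by (rule basis_matrix_carrier)
  obtain X where X: "X \<in> carrier_mat (dim_col M) (dim_col N)" "N = M * X"
    using basis_matrix_factor[OF M Nc basis_matrix_col[OF N]] by metis
  obtain Y where Y: "Y \<in> carrier_mat (dim_col N) (dim_col M)" "M = N * Y"
    using basis_matrix_factor[OF N Mc basis_matrix_col[OF M]] by metis
  have "M * (X * Y) = (M * X) * Y" using assoc_mult_mat[OF Mc X(1) Y(1)] by simp
  also have "\<dots> = M * 1\<^sub>m (dim_col M)" by (simp only: X(2)[symmetric] Y(2)[symmetric] right_mult_one_mat')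
  finally have XY: "X * Y = 1\<^sub>m (dim_col M)"
    using basis_matrix_cancel[OF M mult_carrier_mat[OF X(1) Y(1)] one_carrier_mat] by blast
  have "N * (Y * X) = (N * Y) * X" using assoc_mult_mat[OF Nc Y(1) X(1)] by simp
  also have "\<dots> = N * 1\<^sub>m (dim_col N)" by (simp only: X(2)[symmetric] Y(2)[symmetric] right_mult_one_mat')
  finally have YX: "Y * X = 1\<^sub>m (dim_col N)"
    using basis_matrix_cancel[OF N mult_carrier_mat[OF Y(1) X(1)] one_carrier_mat] by blast
  have eq: "d' = d"
    using mat_left_inverse_dim_le[OF X(1) Y(1) YX] mat_left_inverse_dim_le[OF Y(1) X(1) XY] dM dN by simp
  have Xc: "X \<in> carrier_mat d d" and Yc: "Y \<in> carrier_mat d d" using X(1) Y(1) eq dM dN by auto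
  show thesis by (rule that[OF Xc invertible_matI[OF Xc Yc] X(2) eq]) (use XY dM in simp)
qed

lemma mult_mat_vec_zero_vec: "(A :: 'a::field mat) \<in> carrier_mat k k' \<Longrightarrow> A *\<^sub>v 0\<^sub>v k' = 0\<^sub>v k"
  by (intro eq_vecI) auto

lemma basis_matrix_mult:
  fixes Q G :: "'a::field mat"
  assumes Q: "basis_matrix m V Q" and G: "basis_matrix (dim_col Q) W G"
  shows "basis_matrix m ((\<lambda>w. Q *\<^sub>v w) ` W) (Q * G)"
proof -
  have Qc: "Q \<in> carrier_mat m (dim_col Q)" using Q by (rule basis_matrix_carrier)
  have Gc: "G \<in> carrier_mat (dim_col Q) (dim_col G)" using G by (rule basis_matrix_carrier)
  have QG: "Q * G \<in> carrier_mat m (dim_col (Q * G))" using mult_carrier_mat[OF Qc Gc] by simp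
  have mv: "(Q * G) *\<^sub>v x = Q *\<^sub>v (G *\<^sub>v x)" if "x \<in> carrier_vec (dim_col G)" for x
    using assoc_mult_mat_vec[OF Qc Gc that] .
  have inj: "x = 0\<^sub>v (dim_col (Q * G))" if x: "x \<in> carrier_vec (dim_col (Q * G))" "(Q * G) *\<^sub>v x = 0\<^sub>v m" for x
  proof -
    have x1: "x \<in> carrier_vec (dim_col G)" using x(1) by simp
    have "Q *\<^sub>v (G *\<^sub>v x) = Q *\<^sub>v 0\<^sub>v (dim_col Q)"
      using x(2) mv[OF x1] mult_mat_vec_zero_vec[OF Qc] by simp
    then have "G *\<^sub>v x = 0\<^sub>v (dim_col Q)"
      using basis_matrix_inj[OF Q mult_mat_vec_carrier[OF Gc x1] zero_carrier_vec] by blast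
    then show ?thesis using G x1 unfolding basis_matrix_def by simp
  qed
  have W: "W = (\<lambda>x. G *\<^sub>v x) ` carrier_vec (dim_col G)" using G unfolding basis_matrix_def by blast
  have "(\<lambda>w. Q *\<^sub>v w) ` W = (\<lambda>x. Q *\<^sub>v (G *\<^sub>v x)) ` carrier_vec (dim_col G)" unfolding W by auto
  also have "\<dots> = (\<lambda>x. (Q * G) *\<^sub>v x) ` carrier_vec (dim_col (Q * G))" using mv by (intro image_cong) auto
  finally show ?thesis unfolding basis_matrix_def using QG inj by blast
qed

lemma basis_matrix_one: "basis_matrix k (carrier_vec k) (1\<^sub>m k :: 'a::field mat)"
  unfolding basis_matrix_def by (auto intro!: image_eqI)

lemma basis_matrix_left_invertible:
  fixes T :: "'a::field mat"
  assumes T: "T \<in> carrier_mat k k" and Ti: "Ti \<in> carrier_mat k k" "Ti * T = 1\<^sub>m k"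
  shows "basis_matrix k ((\<lambda>x. T *\<^sub>v x) ` carrier_vec k) T"
proof -
  have inj: "x = 0\<^sub>v k" if x: "x \<in> carrier_vec k" "T *\<^sub>v x = 0\<^sub>v k" for x
  proof -
    have "x = (Ti * T) *\<^sub>v x" using x(1) Ti(2) by simp
    also have "\<dots> = Ti *\<^sub>v (T *\<^sub>v x)" using assoc_mult_mat_vec[OF Ti(1) T x(1)] .
    also have "\<dots> = 0\<^sub>v k" using x(2) mult_mat_vec_zero_vec[OF Ti(1)] by simp
    finally show ?thesis .
  qed
  have "dim_col T = k" using T by simp
  then show ?thesis unfolding basis_matrix_def using T inj by blast
qed

section \<open>Block direct sums\<close>

lemma zero_append_vec: "0\<^sub>v a @\<^sub>v 0\<^sub>v b = (0\<^sub>v (a + b) :: 'a::zero vec)"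
  by (intro eq_vecI) auto

lemma dsum_mat_carrier:
  "M \<in> carrier_mat r c \<Longrightarrow> M' \<in> carrier_mat r' c' \<Longrightarrow> dsum_mat M M' \<in> carrier_mat (r + r') (c + c')"
  unfolding dsum_mat_def by (rule four_block_carrier_mat)

lemma dim_dsum_mat[simp]:
  "dim_row (dsum_mat M M') = dim_row M + dim_row M'" "dim_col (dsum_mat M M') = dim_col M + dim_col M'"
  unfolding dsum_mat_def by simp_all

lemma dsum_mat_empty: "dim_row Z = 0 \<Longrightarrow> dim_col Z = 0 \<Longrightarrow> dsum_mat M Z = M"
  by (rule eq_matI) (auto simp: dsum_mat_def)

lemma dsum_mat_mult_vec:
  fixes M :: "'a::field mat"
  assumes M: "M \<in> carrier_mat r c" and M': "M' \<in> carrier_mat r' c'"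
    and x: "x \<in> carrier_vec c" and x': "x' \<in> carrier_vec c'"
  shows "dsum_mat M M' *\<^sub>v (x @\<^sub>v x') = (M *\<^sub>v x) @\<^sub>v (M' *\<^sub>v x')"
proof -
  have d: "dim_row M = r" "dim_col M = c" "dim_row M' = r'" "dim_col M' = c'" using M M' by auto
  have "dsum_mat M M' *\<^sub>v (x @\<^sub>v x') = (M *\<^sub>v x + 0\<^sub>m r c' *\<^sub>v x') @\<^sub>v (0\<^sub>m r' c *\<^sub>v x + M' *\<^sub>v x')"
    unfolding dsum_mat_def d by (rule four_block_mat_mult_vec[OF M zero_carrier_mat zero_carrier_mat M' x x'])
  also have "0\<^sub>m r c' *\<^sub>v x' = 0\<^sub>v r" using x' by (intro eq_vecI) auto
  also have "0\<^sub>m r' c *\<^sub>v x = 0\<^sub>v r'" using x by (intro eq_vecI) auto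
  finally show ?thesis using M M' x x' by simp
qed

lemma dsum_mat_mult:
  fixes A :: "'a::field mat"
  assumes A: "A \<in> carrier_mat r c" and A': "A' \<in> carrier_mat r' c'"
    and P: "P \<in> carrier_mat c p" and P': "P' \<in> carrier_mat c' p'"
  shows "dsum_mat A A' * dsum_mat P P' = dsum_mat (A * P) (A' * P')"
proof -
  have d: "dim_row A = r" "dim_col A = c" "dim_row A' = r'" "dim_col A' = c'"
    "dim_row P = c" "dim_col P = p" "dim_row P' = c'" "dim_col P' = p'" using A A' P P' by auto
  have "dsum_mat A A' * dsum_mat P P' = four_block_mat (A * P + 0\<^sub>m r c' * 0\<^sub>m c' p) (A * 0\<^sub>m c p' + 0\<^sub>m r c' * P')
     (0\<^sub>m r' c * P + A' * 0\<^sub>m c' p) (0\<^sub>m r' c * 0\<^sub>m c p' + A' * P')"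
    unfolding dsum_mat_def d
    by (rule mult_four_block_mat[OF A zero_carrier_mat zero_carrier_mat A' P zero_carrier_mat zero_carrier_mat P'])
  also have "\<dots> = dsum_mat (A * P) (A' * P')"
    unfolding dsum_mat_def using A A' P P' by simp
  finally show ?thesis .
qed

definition append_set :: "'a vec set \<Rightarrow> 'a vec set \<Rightarrow> 'a vec set" where
  "append_set W W' = {w @\<^sub>v w' | w w'. w \<in> W \<and> w' \<in> W'}"

lemma carrier_vec_add_split:
  "v \<in> carrier_vec (c + c') \<Longrightarrow> \<exists>x \<in> carrier_vec c. \<exists>x' \<in> carrier_vec c'. v = x @\<^sub>v x'"
  by (rule bexI[of _ "vec_first v c"], rule bexI[of _ "vec_last v c'"]) auto

lemma append_set_carrier_vec: "append_set (carrier_vec c) (carrier_vec c') = carrier_vec (c + c')"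
  unfolding append_set_def using carrier_vec_add_split by fastforce

lemma append_vec_in_append_set:
  assumes W: "W \<subseteq> carrier_vec r" and w: "w \<in> carrier_vec r"
  shows "w @\<^sub>v w' \<in> append_set W W' \<longleftrightarrow> w \<in> W \<and> w' \<in> W'"
proof
  assume "w @\<^sub>v w' \<in> append_set W W'"
  then obtain v v' where v: "v \<in> W" "v' \<in> W'" "w @\<^sub>v w' = v @\<^sub>v v'" unfolding append_set_def by blast
  moreover have "v \<in> carrier_vec r" using W v(1) by blast
  ultimately show "w \<in> W \<and> w' \<in> W'" using append_vec_eq[OF w] by metis
qed (auto simp: append_set_def)

lemma image_dsum_mat_append_set:
  fixes M :: "'a::field mat"
  assumes M: "M \<in> carrier_mat r c" and M': "M' \<in> carrier_mat r' c'"
    and X: "X \<subseteq> carrier_vec c" and X': "X' \<subseteq> carrier_vec c'"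
  shows "(\<lambda>u. dsum_mat M M' *\<^sub>v u) ` append_set X X' = append_set ((\<lambda>u. M *\<^sub>v u) ` X) ((\<lambda>u. M' *\<^sub>v u) ` X')"
proof -
  have "dsum_mat M M' *\<^sub>v (x @\<^sub>v x') = (M *\<^sub>v x) @\<^sub>v (M' *\<^sub>v x')" if "x \<in> X" "x' \<in> X'" for x x'
    using dsum_mat_mult_vec[OF M M'] X X' that by blast
  then show ?thesis unfolding append_set_def by (auto simp: image_iff) metis
qed

lemma basis_matrix_dsum:
  fixes M :: "'a::field mat"
  assumes M: "basis_matrix k W M" and M': "basis_matrix k' W' M'"
  shows "basis_matrix (k + k') (append_set W W') (dsum_mat M M')"
proof -
  have Mc: "M \<in> carrier_mat k (dim_col M)" using M by (rule basis_matrix_carrier)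
  have Mc': "M' \<in> carrier_mat k' (dim_col M')" using M' by (rule basis_matrix_carrier)
  have DC: "dsum_mat M M' \<in> carrier_mat (k + k') (dim_col (dsum_mat M M'))"
    using dsum_mat_carrier[OF Mc Mc'] by simp
  have W: "W = (\<lambda>x. M *\<^sub>v x) ` carrier_vec (dim_col M)" using M unfolding basis_matrix_def by blast
  have W': "W' = (\<lambda>x. M' *\<^sub>v x) ` carrier_vec (dim_col M')" using M' unfolding basis_matrix_def by blast
  have img: "(\<lambda>x. dsum_mat M M' *\<^sub>v x) ` carrier_vec (dim_col (dsum_mat M M')) = append_set W W'"
    unfolding dim_dsum_mat append_set_carrier_vec[symmetric] W W'
    by (rule image_dsum_mat_append_set[OF Mc Mc']) auto
  have inj: "x = 0\<^sub>v (dim_col (dsum_mat M M'))"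
    if x: "x \<in> carrier_vec (dim_col (dsum_mat M M'))" "dsum_mat M M' *\<^sub>v x = 0\<^sub>v (k + k')" for x
  proof -
    obtain y y' where y: "y \<in> carrier_vec (dim_col M)" "y' \<in> carrier_vec (dim_col M')" "x = y @\<^sub>v y'"
      using carrier_vec_add_split[of x "dim_col M" "dim_col M'"] x(1) by auto
    have "(M *\<^sub>v y) @\<^sub>v (M' *\<^sub>v y') = 0\<^sub>v k @\<^sub>v 0\<^sub>v k'"
      using x(2) dsum_mat_mult_vec[OF Mc Mc' y(1,2)] y(3) by (simp add: zero_append_vec)
    then have "M *\<^sub>v y = 0\<^sub>v k" "M' *\<^sub>v y' = 0\<^sub>v k'"
      using append_vec_eq[OF mult_mat_vec_carrier[OF Mc y(1)] zero_carrier_vec[of k]] by auto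
    then have "y = 0\<^sub>v (dim_col M)" "y' = 0\<^sub>v (dim_col M')"
      using M M' y(1,2) unfolding basis_matrix_def by blast+
    then show ?thesis using y(3) zero_append_vec by simp
  qed
  show ?thesis unfolding basis_matrix_def using DC inj img by blast
qed

section \<open>The subspaces of one reduction step\<close>

text \<open>For the pair \<open>(A, B) = (A\<^sub>1, B\<^sub>1)\<close> these are \<open>V\<^sub>2\<close>, \<open>U\<^sub>2\<close> and \<open>V\<^sub>3\<close>.\<close>

definition col_space :: "'a::field mat \<Rightarrow> 'a vec set" where
  "col_space B = (\<lambda>u. B *\<^sub>v u) ` carrier_vec (dim_col B)"

definition red_domain :: "'a::field mat \<Rightarrow> 'a mat \<Rightarrow> 'a vec set" where
  "red_domain A B = {u \<in> carrier_vec (dim_col B). A *\<^sub>v u \<in> col_space B}"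

definition red_image :: "'a::field mat \<Rightarrow> 'a mat \<Rightarrow> 'a vec set" where
  "red_image A B = (\<lambda>u. B *\<^sub>v u) ` red_domain A B"

lemma col_space_dsum_mat:
  fixes B :: "'a::field mat"
  assumes B: "B \<in> carrier_mat r c" and B': "B' \<in> carrier_mat r' c'"
  shows "col_space (dsum_mat B B') = append_set (col_space B) (col_space B')"
  unfolding col_space_def dim_dsum_mat append_set_carrier_vec[symmetric] using B B'
  by (intro image_dsum_mat_append_set) auto

lemma red_domain_dsum_mat:
  fixes A B :: "'a::field mat"
  assumes A: "A \<in> carrier_mat r c" and B: "B \<in> carrier_mat r c"
    and A': "A' \<in> carrier_mat r' c'" and B': "B' \<in> carrier_mat r' c'"
  shows "red_domain (dsum_mat A A') (dsum_mat B B') = append_set (red_domain A B) (red_domain A' B')"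
proof -
  have d: "dim_col (dsum_mat B B') = c + c'" "dim_col B = c" "dim_col B' = c'" using B B' by auto
  have Bsub: "col_space B \<subseteq> carrier_vec r" using B unfolding col_space_def by auto
  have split: "x @\<^sub>v x' \<in> red_domain (dsum_mat A A') (dsum_mat B B') \<longleftrightarrow>
      x \<in> red_domain A B \<and> x' \<in> red_domain A' B'"
    if x: "x \<in> carrier_vec c" "x' \<in> carrier_vec c'" for x x'
  proof -
    have "(A *\<^sub>v x) @\<^sub>v (A' *\<^sub>v x') \<in> append_set (col_space B) (col_space B') \<longleftrightarrow>
        A *\<^sub>v x \<in> col_space B \<and> A' *\<^sub>v x' \<in> col_space B'"
      by (rule append_vec_in_append_set[OF Bsub mult_mat_vec_carrier[OF A x(1)]])
    then show ?thesis
      unfolding red_domain_def d col_space_dsum_mat[OF B B'] using x by (simp add: dsum_mat_mult_vec[OF A A' x])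
  qed
  show ?thesis
  proof
    show "red_domain (dsum_mat A A') (dsum_mat B B') \<subseteq> append_set (red_domain A B) (red_domain A' B')"
    proof
      fix u assume u: "u \<in> red_domain (dsum_mat A A') (dsum_mat B B')"
      then have "u \<in> carrier_vec (c + c')" unfolding red_domain_def d by blast
      then obtain x x' where x: "x \<in> carrier_vec c" "x' \<in> carrier_vec c'" "u = x @\<^sub>v x'"
        using carrier_vec_add_split by blast
      then show "u \<in> append_set (red_domain A B) (red_domain A' B')"
        using split[OF x(1,2)] u unfolding append_set_def by blast
    qed
    show "append_set (red_domain A B) (red_domain A' B') \<subseteq> red_domain (dsum_mat A A') (dsum_mat B B')"
    proof
      fix u assume "u \<in> append_set (red_domain A B) (red_domain A' B')"
      then obtain x x' where x: "x \<in> red_domain A B" "x' \<in> red_domain A' B'" "u = x @\<^sub>v x'"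
        unfolding append_set_def by blast
      moreover have "x \<in> carrier_vec c" "x' \<in> carrier_vec c'" using x(1,2) d unfolding red_domain_def by auto
      ultimately show "u \<in> red_domain (dsum_mat A A') (dsum_mat B B')" using split by blast
    qed
  qed
qed

lemma red_image_dsum_mat:
  fixes A B :: "'a::field mat"
  assumes A: "A \<in> carrier_mat r c" and B: "B \<in> carrier_mat r c"
    and A': "A' \<in> carrier_mat r' c'" and B': "B' \<in> carrier_mat r' c'"
  shows "red_image (dsum_mat A A') (dsum_mat B B') = append_set (red_image A B) (red_image A' B')"
proof -
  have "red_domain A B \<subseteq> carrier_vec c" "red_domain A' B' \<subseteq> carrier_vec c'"
    using B B' unfolding red_domain_def by auto
  then show ?thesis unfolding red_image_def red_domain_dsum_mat[OF A B A' B']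
    by (rule image_dsum_mat_append_set[OF B B'])
qed

lemma mult_mat_vec_intertwine:
  fixes S A A' R :: "'a::field mat"
  assumes "S \<in> carrier_mat m m" "R \<in> carrier_mat n n" "A \<in> carrier_mat m n" "A' \<in> carrier_mat m n"
    and "S * A = A' * R" and "w \<in> carrier_vec n"
  shows "A' *\<^sub>v (R *\<^sub>v w) = S *\<^sub>v (A *\<^sub>v w)"
proof -
  have "A' *\<^sub>v (R *\<^sub>v w) = (A' * R) *\<^sub>v w" using assms by (intro assoc_mult_mat_vec[symmetric]) auto
  also have "\<dots> = S *\<^sub>v (A *\<^sub>v w)" unfolding assms(5)[symmetric] using assms by (intro assoc_mult_mat_vec) auto
  finally show ?thesis .
qed

lemma col_space_transport:
  fixes S B B' R :: "'a::field mat"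
  assumes S: "S \<in> carrier_mat m m" and R: "R \<in> carrier_mat n n" "Ri \<in> carrier_mat n n" "R * Ri = 1\<^sub>m n"
    and B: "B \<in> carrier_mat m n" "B' \<in> carrier_mat m n" and eq: "S * B = B' * R"
  shows "col_space B' = (\<lambda>w. S *\<^sub>v w) ` col_space B"
proof -
  have k: "B' *\<^sub>v (R *\<^sub>v w) = S *\<^sub>v (B *\<^sub>v w)" if "w \<in> carrier_vec n" for w
    by (rule mult_mat_vec_intertwine[OF S R(1) B eq that])
  have pull: "B' *\<^sub>v u = S *\<^sub>v (B *\<^sub>v (Ri *\<^sub>v u))" if u: "u \<in> carrier_vec n" for u
  proof -
    have "R *\<^sub>v (Ri *\<^sub>v u) = u" using assoc_mult_mat_vec[OF R(1,2) u, symmetric] R(3) u by simp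
    then show ?thesis using k[of "Ri *\<^sub>v u"] R(2) u by simp
  qed
  show ?thesis
  proof
    show "col_space B' \<subseteq> (\<lambda>w. S *\<^sub>v w) ` col_space B"
    proof
      fix v assume "v \<in> col_space B'"
      then obtain u where u: "u \<in> carrier_vec n" "v = B' *\<^sub>v u" using B(2) unfolding col_space_def by auto
      have "B *\<^sub>v (Ri *\<^sub>v u) \<in> col_space B" using B(1) R(2) u unfolding col_space_def by auto
      then show "v \<in> (\<lambda>w. S *\<^sub>v w) ` col_space B" by (rule image_eqI[rotated]) (simp add: u(2) pull[OF u(1)])
    qed
    show "(\<lambda>w. S *\<^sub>v w) ` col_space B \<subseteq> col_space B'"
    proof
      fix v assume "v \<in> (\<lambda>w. S *\<^sub>v w) ` col_space B"
      then obtain w where w: "w \<in> carrier_vec n" "v = S *\<^sub>v (B *\<^sub>v w)" using B(1) unfolding col_space_def by auto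
      then show "v \<in> col_space B'"
        unfolding col_space_def using k[OF w(1)] B(2) R(1) by (auto intro!: image_eqI[of _ _ "R *\<^sub>v w"])
    qed
  qed
qed

lemma red_domain_transport:
  fixes S A A' B B' R :: "'a::field mat"
  assumes S: "S \<in> carrier_mat m m" "Si \<in> carrier_mat m m" "Si * S = 1\<^sub>m m"
    and R: "R \<in> carrier_mat n n" "Ri \<in> carrier_mat n n" "R * Ri = 1\<^sub>m n"
    and A: "A \<in> carrier_mat m n" "A' \<in> carrier_mat m n" and B: "B \<in> carrier_mat m n" "B' \<in> carrier_mat m n"
    and eqA: "S * A = A' * R" and eqB: "S * B = B' * R"
  shows "red_domain A' B' = (\<lambda>w. R *\<^sub>v w) ` red_domain A B"
proof -
  have Sinj: "x = y" if "x \<in> carrier_vec m" "y \<in> carrier_vec m" "S *\<^sub>v x = S *\<^sub>v y" for x y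
    using basis_matrix_inj[OF basis_matrix_left_invertible[OF S]] S(1) that by simp
  have Rinv: "R *\<^sub>v (Ri *\<^sub>v u) = u" if "u \<in> carrier_vec n" for u
    using assoc_mult_mat_vec[OF R(1,2) that, symmetric] R(3) that by simp
  have colB: "col_space B' = (\<lambda>w. S *\<^sub>v w) ` col_space B"
    by (rule col_space_transport[OF S(1) R B eqB])
  have "A' *\<^sub>v (R *\<^sub>v p) \<in> col_space B' \<longleftrightarrow> A *\<^sub>v p \<in> col_space B" if p: "p \<in> carrier_vec n" for p
  proof -
    have sub: "col_space B \<subseteq> carrier_vec m" using B(1) unfolding col_space_def by auto
    have "S *\<^sub>v (A *\<^sub>v p) \<in> (\<lambda>w. S *\<^sub>v w) ` col_space B \<longleftrightarrow> A *\<^sub>v p \<in> col_space B"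
    proof
      assume "S *\<^sub>v (A *\<^sub>v p) \<in> (\<lambda>w. S *\<^sub>v w) ` col_space B"
      then obtain w where "w \<in> col_space B" "S *\<^sub>v (A *\<^sub>v p) = S *\<^sub>v w" by blast
      then show "A *\<^sub>v p \<in> col_space B" using Sinj[OF mult_mat_vec_carrier[OF A(1) p], of w] sub by auto
    qed auto
    then show ?thesis unfolding colB mult_mat_vec_intertwine[OF S(1) R(1) A eqA p] .
  qed
  note iff = this
  show ?thesis
  proof
    show "red_domain A' B' \<subseteq> (\<lambda>w. R *\<^sub>v w) ` red_domain A B"
    proof
      fix u assume "u \<in> red_domain A' B'"
      then have u: "u \<in> carrier_vec n" "A' *\<^sub>v u \<in> col_space B'" using B(2) unfolding red_domain_def by auto
      have Riu: "Ri *\<^sub>v u \<in> carrier_vec n" using R(2) u(1) by simp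
      then have "Ri *\<^sub>v u \<in> red_domain A B"
        using iff[OF Riu] u Rinv[OF u(1)] B(1) unfolding red_domain_def by simp
      then show "u \<in> (\<lambda>w. R *\<^sub>v w) ` red_domain A B" by (rule image_eqI[rotated]) (simp add: Rinv[OF u(1)])
    qed
    show "(\<lambda>w. R *\<^sub>v w) ` red_domain A B \<subseteq> red_domain A' B'"
      using iff R(1) B unfolding red_domain_def by auto
  qed
qed

lemma red_image_transport:
  fixes S A A' B B' R :: "'a::field mat"
  assumes S: "S \<in> carrier_mat m m" "Si \<in> carrier_mat m m" "Si * S = 1\<^sub>m m"
    and R: "R \<in> carrier_mat n n" "Ri \<in> carrier_mat n n" "R * Ri = 1\<^sub>m n"
    and A: "A \<in> carrier_mat m n" "A' \<in> carrier_mat m n" and B: "B \<in> carrier_mat m n" "B' \<in> carrier_mat m n"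
    and eqA: "S * A = A' * R" and eqB: "S * B = B' * R"
  shows "red_image A' B' = (\<lambda>w. S *\<^sub>v w) ` red_image A B"
proof -
  have "red_image A' B' = (\<lambda>w. B' *\<^sub>v (R *\<^sub>v w)) ` red_domain A B"
    unfolding red_image_def red_domain_transport[OF S R A B eqA eqB] image_image ..
  also have "\<dots> = (\<lambda>w. S *\<^sub>v (B *\<^sub>v w)) ` red_domain A B"
    using mult_mat_vec_intertwine[OF S(1) R(1) B eqB] B(1) by (intro image_cong) (auto simp: red_domain_def)
  finally show ?thesis unfolding red_image_def image_image .
qed

lemma basis_matrices_transport:
  fixes S A A' B B' R :: "'a::field mat"
  assumes S: "S \<in> carrier_mat m m" "Si \<in> carrier_mat m m" "Si * S = 1\<^sub>m m"
    and R: "R \<in> carrier_mat n n" "Ri \<in> carrier_mat n n" "R * Ri = 1\<^sub>m n"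
    and A: "A \<in> carrier_mat m n" "A' \<in> carrier_mat m n" and B: "B \<in> carrier_mat m n" "B' \<in> carrier_mat m n"
    and eqA: "S * A = A' * R" and eqB: "S * B = B' * R"
    and P: "basis_matrix n (red_domain A B) P" and Q: "basis_matrix m (col_space B) Q"
    and Q3: "basis_matrix m (red_image A B) Q3"
  shows "basis_matrix n (red_domain A' B') (R * P)" "basis_matrix m (col_space B') (S * Q)"
    "basis_matrix m (red_image A' B') (S * Q3)"
proof -
  have bS: "basis_matrix m ((\<lambda>x. S *\<^sub>v x) ` carrier_vec m) S"
    by (rule basis_matrix_left_invertible[OF S])
  have bR: "basis_matrix n ((\<lambda>x. R *\<^sub>v x) ` carrier_vec n) R"
    by (rule basis_matrix_left_invertible[OF R(1,2)])
      (use mat_mult_left_right_inverse[OF R] in simp)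
  show "basis_matrix n (red_domain A' B') (R * P)"
    unfolding red_domain_transport[OF S R A B eqA eqB] using basis_matrix_mult[OF bR] P R(1) by simp
  show "basis_matrix m (col_space B') (S * Q)"
    unfolding col_space_transport[OF S(1) R B eqB] using basis_matrix_mult[OF bS] Q S(1) by simp
  show "basis_matrix m (red_image A' B') (S * Q3)"
    unfolding red_image_transport[OF S R A B eqA eqB] using basis_matrix_mult[OF bS] Q3 S(1) by simp
qed

section \<open>Reduced pairs\<close>

text \<open>\<open>(A\<^sub>2, B\<^sub>2)\<close> represents the restriction of \<open>(A, B)\<close> to \<open>U\<^sub>2 \<rightarrow> V\<^sub>2\<close>, and \<open>d, e, f\<close> are the
  dimensions of \<open>U\<^sub>2, V\<^sub>2, V\<^sub>3\<close>.\<close>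

fun is_reduction :: "'a::field mat \<times> 'a mat \<Rightarrow> 'a mat \<times> 'a mat \<Rightarrow> nat \<Rightarrow> nat \<Rightarrow> nat \<Rightarrow> bool" where
  "is_reduction (A, B) (A2, B2) d e f \<longleftrightarrow>
     B \<in> carrier_mat (dim_row A) (dim_col A) \<and> A2 \<in> carrier_mat e d \<and> B2 \<in> carrier_mat e d \<and>
     (\<exists>P Q Q3. basis_matrix (dim_col A) (red_domain A B) P \<and> basis_matrix (dim_row A) (col_space B) Q \<and>
        basis_matrix (dim_row A) (red_image A B) Q3 \<and> dim_col P = d \<and> dim_col Q = e \<and> dim_col Q3 = f \<and>
        A * P = Q * A2 \<and> B * P = Q * B2)"

lemma red_image_eq_image_col_space:
  fixes A B P Q B2 :: "'a::field mat"
  assumes B: "B \<in> carrier_mat m n" and P: "basis_matrix n (red_domain A B) P"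
    and Q: "Q \<in> carrier_mat m e" and B2: "B2 \<in> carrier_mat e (dim_col P)" and eq: "B * P = Q * B2"
  shows "red_image A B = (\<lambda>w. Q *\<^sub>v w) ` col_space B2"
proof -
  have Pc: "P \<in> carrier_mat n (dim_col P)" using P by (rule basis_matrix_carrier)
  have U: "red_domain A B = (\<lambda>x. P *\<^sub>v x) ` carrier_vec (dim_col P)" using P unfolding basis_matrix_def by blast
  have "B *\<^sub>v (P *\<^sub>v x) = Q *\<^sub>v (B2 *\<^sub>v x)" if "x \<in> carrier_vec (dim_col P)" for x
    using assoc_mult_mat_vec[OF B Pc that] assoc_mult_mat_vec[OF Q B2 that] eq by simp
  then have "(\<lambda>x. B *\<^sub>v (P *\<^sub>v x)) ` carrier_vec (dim_col P) = (\<lambda>x. Q *\<^sub>v (B2 *\<^sub>v x)) ` carrier_vec (dim_col P)"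
    by (rule image_cong[OF refl])
  moreover have "dim_col B2 = dim_col P" using B2 by simp
  ultimately show ?thesis unfolding red_image_def col_space_def U image_image by simp
qed

lemma is_reductionI:
  fixes A B A2 B2 P Q G :: "'a::field mat"
  assumes B: "B \<in> carrier_mat (dim_row A) (dim_col A)"
    and A2: "A2 \<in> carrier_mat (dim_col Q) (dim_col P)" and B2: "B2 \<in> carrier_mat (dim_col Q) (dim_col P)"
    and P: "basis_matrix (dim_col A) (red_domain A B) P" and Q: "basis_matrix (dim_row A) (col_space B) Q"
    and G: "basis_matrix (dim_col Q) (col_space B2) G"
    and eqA: "A * P = Q * A2" and eqB: "B * P = Q * B2"
  shows "is_reduction (A, B) (A2, B2) (dim_col P) (dim_col Q) (dim_col G)"
proof -
  have "red_image A B = (\<lambda>w. Q *\<^sub>v w) ` col_space B2"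
    by (rule red_image_eq_image_col_space[OF B P basis_matrix_carrier[OF Q] B2 eqB])
  then have "basis_matrix (dim_row A) (red_image A B) (Q * G)" using basis_matrix_mult[OF Q G] by simp
  then show ?thesis unfolding is_reduction.simps using B A2 B2 P Q eqA eqB
    by (intro conjI exI[of _ P] exI[of _ Q] exI[of _ "Q * G"]) auto
qed

lemma is_reduction_surj:
  fixes A B :: "'a::field mat"
  assumes A: "A \<in> carrier_mat r c" and B: "B \<in> carrier_mat r c" and surj: "col_space B = carrier_vec r"
  shows "is_reduction (A, B) (A, B) c r r"
proof -
  have d: "dim_row A = r" "dim_col A = c" "dim_col B = c" using A B by auto
  have U: "red_domain A B = carrier_vec c" unfolding red_domain_def d surj using A by auto
  have "is_reduction (A, B) (A, B) (dim_col (1\<^sub>m c :: 'a mat)) (dim_col (1\<^sub>m r :: 'a mat)) (dim_col (1\<^sub>m r :: 'a mat))"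
    by (rule is_reductionI[where P = "1\<^sub>m c" and Q = "1\<^sub>m r" and G = "1\<^sub>m r"])
      (use A B basis_matrix_one[of c] basis_matrix_one[of r] in \<open>auto simp: d U surj\<close>)
  then show ?thesis by simp
qed

lemma is_reduction_dsum_pair:
  fixes X X' Y Y' :: "'a::field mat \<times> 'a mat"
  assumes red: "is_reduction X Y d e f" and red': "is_reduction X' Y' d' e' f'"
  shows "is_reduction (dsum_pair X X') (dsum_pair Y Y') (d + d') (e + e') (f + f')"
proof -
  obtain A B A' B' A2 B2 A2' B2' where pairs: "X = (A, B)" "X' = (A', B')" "Y = (A2, B2)" "Y' = (A2', B2')"
    by (metis prod.exhaust)
  obtain P Q Q3 where B: "B \<in> carrier_mat (dim_row A) (dim_col A)"
    and A2: "A2 \<in> carrier_mat e d" "B2 \<in> carrier_mat e d"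
    and P: "basis_matrix (dim_col A) (red_domain A B) P" and Q: "basis_matrix (dim_row A) (col_space B) Q"
    and Q3: "basis_matrix (dim_row A) (red_image A B) Q3"
    and dims: "dim_col P = d" "dim_col Q = e" "dim_col Q3 = f" and eq: "A * P = Q * A2" "B * P = Q * B2"
    using red unfolding pairs by auto
  obtain P' Q' Q3' where B': "B' \<in> carrier_mat (dim_row A') (dim_col A')"
    and A2': "A2' \<in> carrier_mat e' d'" "B2' \<in> carrier_mat e' d'"
    and P': "basis_matrix (dim_col A') (red_domain A' B') P'" and Q': "basis_matrix (dim_row A') (col_space B') Q'"
    and Q3': "basis_matrix (dim_row A') (red_image A' B') Q3'"
    and dims': "dim_col P' = d'" "dim_col Q' = e'" "dim_col Q3' = f'" and eq': "A' * P' = Q' * A2'" "B' * P' = Q' * B2'"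
    using red' unfolding pairs by auto
  have A: "A \<in> carrier_mat (dim_row A) (dim_col A)" and A': "A' \<in> carrier_mat (dim_row A') (dim_col A')" by auto
  have Pc: "P \<in> carrier_mat (dim_col A) d" and Qc: "Q \<in> carrier_mat (dim_row A) e"
    using basis_matrix_carrier[OF P] basis_matrix_carrier[OF Q] dims by auto
  have Pc': "P' \<in> carrier_mat (dim_col A') d'" and Qc': "Q' \<in> carrier_mat (dim_row A') e'"
    using basis_matrix_carrier[OF P'] basis_matrix_carrier[OF Q'] dims' by auto
  have "basis_matrix (dim_col (dsum_mat A A')) (red_domain (dsum_mat A A') (dsum_mat B B')) (dsum_mat P P')"
    using basis_matrix_dsum[OF P P'] red_domain_dsum_mat[OF A B A' B'] by simp
  moreover have "basis_matrix (dim_row (dsum_mat A A')) (col_space (dsum_mat B B')) (dsum_mat Q Q')"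
    using basis_matrix_dsum[OF Q Q'] col_space_dsum_mat[OF B B'] by simp
  moreover have "basis_matrix (dim_row (dsum_mat A A')) (red_image (dsum_mat A A') (dsum_mat B B')) (dsum_mat Q3 Q3')"
    using basis_matrix_dsum[OF Q3 Q3'] red_image_dsum_mat[OF A B A' B'] by simp
  moreover have "dsum_mat A A' * dsum_mat P P' = dsum_mat Q Q' * dsum_mat A2 A2'"
    using dsum_mat_mult[OF A A' Pc Pc'] dsum_mat_mult[OF Qc Qc' A2(1) A2'(1)] eq(1) eq'(1) by simp
  moreover have "dsum_mat B B' * dsum_mat P P' = dsum_mat Q Q' * dsum_mat B2 B2'"
    using dsum_mat_mult[OF B B' Pc Pc'] dsum_mat_mult[OF Qc Qc' A2(2) A2'(2)] eq(2) eq'(2) by simp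
  moreover have "dsum_mat B B' \<in> carrier_mat (dim_row (dsum_mat A A')) (dim_col (dsum_mat A A'))"
    using dsum_mat_carrier[OF B B'] by simp
  moreover have "dsum_mat A2 A2' \<in> carrier_mat (e + e') (d + d')" "dsum_mat B2 B2' \<in> carrier_mat (e + e') (d + d')"
    using dsum_mat_carrier[OF A2(1) A2'(1)] dsum_mat_carrier[OF A2(2) A2'(2)] by auto
  ultimately show ?thesis unfolding pairs dsum_pair_def using dims dims' by fastforce
qed

lemma reduced_pair_intertwine:
  fixes S R P Q X Y C C' C2 C2' :: "'a::field mat"
  assumes S: "S \<in> carrier_mat m m" and R: "R \<in> carrier_mat n n"
    and P: "P \<in> carrier_mat n d" and Q: "Q \<in> carrier_mat m e"
    and X: "X \<in> carrier_mat d d" and Y: "Y \<in> carrier_mat e e"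
    and SQ: "basis_matrix m W (S * Q)"
    and C: "C \<in> carrier_mat m n" "C' \<in> carrier_mat m n" "C2 \<in> carrier_mat e d" "C2' \<in> carrier_mat e d"
    and eq: "S * C = C' * R" and red: "C * P = Q * C2" and red': "C' * (R * P * X) = (S * Q * Y) * C2'"
  shows "C2 * X = Y * C2'"
proof -
  have PX: "P * X \<in> carrier_mat n d" using P X by simp
  have "(S * Q) * (C2 * X) = S * ((Q * C2) * X)"
    by (simp only: assoc_mult_mat[OF S Q mult_carrier_mat[OF C(3) X]] assoc_mult_mat[OF Q C(3) X])
  also have "\<dots> = (S * C) * (P * X)"
    by (simp only: red[symmetric] assoc_mult_mat[OF C(1) P X] assoc_mult_mat[OF S C(1) PX])
  also have "\<dots> = C' * (R * P * X)"
    by (simp only: eq assoc_mult_mat[OF C(2) R PX] assoc_mult_mat[OF R P X])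
  also have "\<dots> = (S * Q) * (Y * C2')"
    by (simp only: red' assoc_mult_mat[OF mult_carrier_mat[OF S Q] Y C(4)])
  finally have "(S * Q) * (C2 * X) = (S * Q) * (Y * C2')" .
  moreover have "C2 * X \<in> carrier_mat (dim_col (S * Q)) d" "Y * C2' \<in> carrier_mat (dim_col (S * Q)) d"
    using Q C(3,4) X Y by auto
  ultimately show ?thesis using basis_matrix_cancel[OF SQ] by blast
qed

lemma is_reduction_pair_equiv:
  fixes A B A' B' A2 B2 A2' B2' :: "'a::field mat"
  assumes equiv: "pair_equiv (A, B) (A', B')" and A: "A \<in> carrier_mat m n"
    and red: "is_reduction (A, B) (A2, B2) d e f" and red': "is_reduction (A', B') (A2', B2') d' e' f'"
  shows "d' = d \<and> e' = e \<and> f' = f \<and> pair_equiv (A2', B2') (A2, B2)"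
proof -
  obtain S R where c: "B \<in> carrier_mat m n" "A' \<in> carrier_mat m n" "B' \<in> carrier_mat m n"
    and S: "S \<in> carrier_mat m m" "invertible_mat S" and R: "R \<in> carrier_mat n n" "invertible_mat R"
    and eqA: "S * A = A' * R" and eqB: "S * B = B' * R"
    using pair_equivE[OF equiv A] .
  obtain Si where Si: "Si \<in> carrier_mat m m" "S * Si = 1\<^sub>m m" "Si * S = 1\<^sub>m m"
    using invertible_mat_obtain_inverse[OF S] .
  obtain Ri where Ri: "Ri \<in> carrier_mat n n" "R * Ri = 1\<^sub>m n" "Ri * R = 1\<^sub>m n"
    using invertible_mat_obtain_inverse[OF R] .
  have dims: "dim_row A = m" "dim_col A = n" "dim_row A' = m" "dim_col A' = n" "dim_col B = n"
    using A c by auto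
  obtain P Q Q3 where A2: "A2 \<in> carrier_mat e d" "B2 \<in> carrier_mat e d"
    and P: "basis_matrix n (red_domain A B) P" and Q: "basis_matrix m (col_space B) Q"
    and Q3: "basis_matrix m (red_image A B) Q3"
    and dd: "dim_col P = d" "dim_col Q = e" "dim_col Q3 = f" and eq: "A * P = Q * A2" "B * P = Q * B2"
    using red unfolding is_reduction.simps dims by blast
  obtain P' Q' Q3' where A2': "A2' \<in> carrier_mat e' d'" "B2' \<in> carrier_mat e' d'"
    and P': "basis_matrix n (red_domain A' B') P'" and Q': "basis_matrix m (col_space B') Q'"
    and Q3': "basis_matrix m (red_image A' B') Q3'"
    and dd': "dim_col P' = d'" "dim_col Q' = e'" "dim_col Q3' = f'" and eq': "A' * P' = Q' * A2'" "B' * P' = Q' * B2'"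
    using red' unfolding is_reduction.simps dims by blast
  have Pc: "P \<in> carrier_mat n d" and Qc: "Q \<in> carrier_mat m e"
    using basis_matrix_carrier[OF P] basis_matrix_carrier[OF Q] dd by auto
  have RP: "basis_matrix n (red_domain A' B') (R * P)" and SQ: "basis_matrix m (col_space B') (S * Q)"
    and SQ3: "basis_matrix m (red_image A' B') (S * Q3)"
    using basis_matrices_transport[OF S(1) Si(1,3) R(1) Ri(1,2) A c(2,1,3) eqA eqB P Q Q3] by auto
  obtain X where X: "X \<in> carrier_mat d d" "invertible_mat X" "P' = R * P * X" "d' = d"
    by (rule basis_matrix_change[OF RP P' _ dd'(1)]) (use dd in simp)
  obtain Y where Y: "Y \<in> carrier_mat e e" "invertible_mat Y" "Q' = S * Q * Y" "e' = e"
    by (rule basis_matrix_change[OF SQ Q' _ dd'(2)]) (use dd in simp)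
  obtain Z where "Z \<in> carrier_mat f f" "invertible_mat Z" "Q3' = S * Q3 * Z" "f' = f"
    by (rule basis_matrix_change[OF SQ3 Q3' _ dd'(3)]) (use dd in simp)
  have A2'e: "A2' \<in> carrier_mat e d" "B2' \<in> carrier_mat e d" using A2' X(4) Y(4) by auto
  have "A2 * X = Y * A2'" "B2 * X = Y * B2'"
    using reduced_pair_intertwine[OF S(1) R(1) Pc Qc X(1) Y(1) SQ A c(2) A2(1) A2'e(1) eqA eq(1)]
      reduced_pair_intertwine[OF S(1) R(1) Pc Qc X(1) Y(1) SQ c(1,3) A2(2) A2'e(2) eqB eq(2)]
      eq'[unfolded X(3) Y(3)] by blast+
  then have "pair_equiv (A2', B2') (A2, B2)"
    using pair_equivI[OF A2'e A2 Y(1,2) X(1,2)] by simp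
  then show ?thesis using X(4) Y(4) \<open>f' = f\<close> by simp
qed

section \<open>The canonical summands\<close>

lemma shift_mat_mult_vec:
  fixes M :: "'a::field mat"
  assumes M: "M \<in> carrier_mat r c"
    and ent: "\<And>i l. i < r \<Longrightarrow> l < c \<Longrightarrow> M $$ (i, l) = (if l + a = i + b then 1 else 0)"
    and x: "x \<in> carrier_vec c"
  shows "M *\<^sub>v x = vec r (\<lambda>i. if a \<le> i + b \<and> i + b - a < c then x $ (i + b - a) else 0)"
proof (rule eq_vecI)
  fix i assume "i < dim_vec (vec r (\<lambda>i. if a \<le> i + b \<and> i + b - a < c then x $ (i + b - a) else 0))"
  then have i: "i < r" by simp
  have "row M i = (if a \<le> i + b \<and> i + b - a < c then unit_vec c (i + b - a) else 0\<^sub>v c)"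
  proof (rule eq_vecI)
    fix l assume "l < dim_vec (if a \<le> i + b \<and> i + b - a < c then unit_vec c (i + b - a) else 0\<^sub>v c :: 'a vec)"
    then have l: "l < c" by (auto split: if_splits)
    show "row M i $ l = (if a \<le> i + b \<and> i + b - a < c then unit_vec c (i + b - a) else 0\<^sub>v c :: 'a vec) $ l"
      using i l M ent[OF i l] by (auto simp: unit_vec_def)
  qed (use M in simp)
  moreover have "(M *\<^sub>v x) $ i = row M i \<bullet> x" using i M by simp
  ultimately show "(M *\<^sub>v x) $ i = vec r (\<lambda>i. if a \<le> i + b \<and> i + b - a < c then x $ (i + b - a) else 0) $ i"
    using i x by (cases "a \<le> i + b \<and> i + b - a < c") auto
qed (use M in simp)

lemma jordan0_carrier: "(jordan0 k :: 'a::field mat) \<in> carrier_mat k k"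
  unfolding jordan0_def by (rule mat_carrier)

lemma Lmat_carrier: "(Lmat k :: 'a::field mat) \<in> carrier_mat (k - 1) k"
  unfolding Lmat_def by (rule mat_carrier)

lemma Rmat_carrier: "(Rmat k :: 'a::field mat) \<in> carrier_mat (k - 1) k"
  unfolding Rmat_def by (rule mat_carrier)

lemma Lmat_transpose_carrier: "(Lmat k :: 'a::field mat)\<^sup>T \<in> carrier_mat k (k - 1)"
  using Lmat_carrier[of k] by simp

lemma Rmat_transpose_carrier: "(Rmat k :: 'a::field mat)\<^sup>T \<in> carrier_mat k (k - 1)"
  using Rmat_carrier[of k] by simp

lemma dim_jordan0[simp]: "dim_row (jordan0 k) = k" "dim_col (jordan0 k) = k"
  unfolding jordan0_def by simp_all

lemma dim_Lmat[simp]: "dim_row (Lmat k) = k - 1" "dim_col (Lmat k) = k"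
  unfolding Lmat_def by simp_all

lemma dim_Rmat[simp]: "dim_row (Rmat k) = k - 1" "dim_col (Rmat k) = k"
  unfolding Rmat_def by simp_all

lemma jordan0_mult_vec:
  "x \<in> carrier_vec k \<Longrightarrow> (jordan0 k :: 'a::field mat) *\<^sub>v x = vec k (\<lambda>i. if i = 0 then 0 else x $ (i - 1))"
  by (subst shift_mat_mult_vec[OF jordan0_carrier, where a = 1 and b = 0])
    (auto simp: jordan0_def intro!: eq_vecI)

lemma Rmat_mult_vec:
  "x \<in> carrier_vec k \<Longrightarrow> (Rmat k :: 'a::field mat) *\<^sub>v x = vec (k - 1) (\<lambda>i. x $ (i + 1))"
  by (subst shift_mat_mult_vec[OF Rmat_carrier, where a = 0 and b = 1])
    (auto simp: Rmat_def intro!: eq_vecI)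

lemma Rmat_transpose_mult_vec:
  "x \<in> carrier_vec (k - 1) \<Longrightarrow> (Rmat k :: 'a::field mat)\<^sup>T *\<^sub>v x = vec k (\<lambda>i. if i = 0 then 0 else x $ (i - 1))"
  by (subst shift_mat_mult_vec[OF Rmat_transpose_carrier, where a = 1 and b = 0])
    (auto simp: Rmat_def intro!: eq_vecI)

lemma Lmat_transpose_mult_vec:
  "x \<in> carrier_vec (k - 1) \<Longrightarrow> (Lmat k :: 'a::field mat)\<^sup>T *\<^sub>v x = vec k (\<lambda>i. if i < k - 1 then x $ i else 0)"
  by (subst shift_mat_mult_vec[OF Lmat_transpose_carrier, where a = 0 and b = 0])
    (auto simp: Lmat_def intro!: eq_vecI)

definition vanishing_first :: "nat \<Rightarrow> 'a::field vec set" where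
  "vanishing_first k = {v \<in> carrier_vec k. 0 < k \<longrightarrow> v $ 0 = 0}"

lemma image_eq_by_right_inverse:
  assumes "\<And>x. x \<in> X \<Longrightarrow> f x \<in> Y" and "\<And>y. y \<in> Y \<Longrightarrow> g y \<in> X \<and> f (g y) = y"
  shows "f ` X = Y"
proof
  show "f ` X \<subseteq> Y" using assms(1) by blast
  show "Y \<subseteq> f ` X" using assms(2) by (metis image_eqI subsetI)
qed

lemma basis_matrix_Rmat_transpose: "basis_matrix k (vanishing_first k) ((Rmat k)\<^sup>T :: 'a::field mat)"
proof -
  have inj: "x = 0\<^sub>v (k - 1)" if x: "x \<in> carrier_vec (k - 1)" "(Rmat k :: 'a mat)\<^sup>T *\<^sub>v x = 0\<^sub>v k" for x
  proof (rule eq_vecI)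
    fix l assume "l < dim_vec (0\<^sub>v (k - 1) :: 'a vec)"
    then have l: "l < k - 1" by simp
    have "((Rmat k :: 'a mat)\<^sup>T *\<^sub>v x) $ (l + 1) = x $ l" using Rmat_transpose_mult_vec[OF x(1)] l by simp
    then show "x $ l = 0\<^sub>v (k - 1) $ l" using x(2) l by simp
  qed (use x in simp)
  have "(\<lambda>x. (Rmat k :: 'a mat)\<^sup>T *\<^sub>v x) ` carrier_vec (k - 1) = vanishing_first k"
  proof (rule image_eq_by_right_inverse[where g = "\<lambda>v. vec (k - 1) (\<lambda>l. v $ (l + 1))"])
    show "(Rmat k :: 'a mat)\<^sup>T *\<^sub>v x \<in> vanishing_first k" if "x \<in> carrier_vec (k - 1)" for x
      unfolding Rmat_transpose_mult_vec[OF that] vanishing_first_def by simp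
    show "vec (k - 1) (\<lambda>l. v $ (l + 1)) \<in> carrier_vec (k - 1) \<and>
        (Rmat k :: 'a mat)\<^sup>T *\<^sub>v vec (k - 1) (\<lambda>l. v $ (l + 1)) = v" if "v \<in> vanishing_first k" for v
      using that unfolding Rmat_transpose_mult_vec[OF vec_carrier] vanishing_first_def by (auto intro!: eq_vecI)
  qed
  then show ?thesis unfolding basis_matrix_def using Rmat_transpose_carrier[of k] inj by simp
qed

lemma col_space_Rmat_transpose: "col_space ((Rmat k)\<^sup>T :: 'a::field mat) = vanishing_first k"
  using basis_matrix_Rmat_transpose[of k] unfolding basis_matrix_def col_space_def by metis

lemma col_space_jordan0: "col_space (jordan0 k :: 'a::field mat) = vanishing_first k"
  unfolding col_space_def dim_jordan0
proof (rule image_eq_by_right_inverse[where g = "\<lambda>v. vec k (\<lambda>l. if l + 1 < k then v $ (l + 1) else 0)"])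
  show "jordan0 k *\<^sub>v x \<in> vanishing_first k" if "x \<in> carrier_vec k" for x :: "'a vec"
    unfolding jordan0_mult_vec[OF that] vanishing_first_def by simp
  show "vec k (\<lambda>l. if l + 1 < k then v $ (l + 1) else 0) \<in> carrier_vec k \<and>
      jordan0 k *\<^sub>v vec k (\<lambda>l. if l + 1 < k then v $ (l + 1) else 0) = v" if "v \<in> vanishing_first k" for v :: "'a vec"
    using that unfolding jordan0_mult_vec[OF vec_carrier] vanishing_first_def by (auto intro!: eq_vecI)
qed

lemma col_space_Rmat: "col_space (Rmat k :: 'a::field mat) = carrier_vec (k - 1)"
  unfolding col_space_def dim_Rmat
proof (rule image_eq_by_right_inverse[where g = "\<lambda>v. vec k (\<lambda>l. if l = 0 then 0 else v $ (l - 1))"])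
  show "Rmat k *\<^sub>v x \<in> carrier_vec (k - 1)" if "x \<in> carrier_vec k" for x :: "'a vec"
    unfolding Rmat_mult_vec[OF that] by simp
  show "vec k (\<lambda>l. if l = 0 then 0 else v $ (l - 1)) \<in> carrier_vec k \<and>
      Rmat k *\<^sub>v vec k (\<lambda>l. if l = 0 then 0 else v $ (l - 1)) = v" if "v \<in> carrier_vec (k - 1)" for v :: "'a vec"
    using that unfolding Rmat_mult_vec[OF vec_carrier] by (auto intro!: eq_vecI)
qed

lemma col_space_one: "col_space (1\<^sub>m k :: 'a::field mat) = carrier_vec k"
  unfolding col_space_def by (auto intro!: image_eqI)

lemma col_space_invertible:
  fixes D :: "'a::field mat"
  assumes D: "D \<in> carrier_mat r r" "invertible_mat D"
  shows "col_space D = carrier_vec r"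
proof -
  obtain Di where Di: "Di \<in> carrier_mat r r" "D * Di = 1\<^sub>m r"
    using invertible_mat_obtain_inverse[OF D] by blast
  have "dim_col D = r" using D(1) by simp
  then show ?thesis unfolding col_space_def
  proof (rule ssubst, intro image_eq_by_right_inverse[where g = "\<lambda>v. Di *\<^sub>v v"])
    show "D *\<^sub>v x \<in> carrier_vec r" if "x \<in> carrier_vec r" for x using D(1) that by simp
    show "Di *\<^sub>v v \<in> carrier_vec r \<and> D *\<^sub>v (Di *\<^sub>v v) = v" if "v \<in> carrier_vec r" for v
      using assoc_mult_mat_vec[OF D(1) Di(1) that, symmetric] Di that by simp
  qed
qed

lemma red_domain_one_jordan0: "red_domain (1\<^sub>m k :: 'a::field mat) (jordan0 k) = vanishing_first k"
  unfolding red_domain_def col_space_jordan0 by (auto simp: vanishing_first_def)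

lemma red_domain_Lmat_Rmat_transpose:
  assumes k: "1 \<le> k"
  shows "red_domain ((Lmat k)\<^sup>T :: 'a::field mat) ((Rmat k)\<^sup>T) = vanishing_first (k - 1)"
proof -
  have "(Lmat k :: 'a mat)\<^sup>T *\<^sub>v u \<in> vanishing_first k \<longleftrightarrow> u \<in> vanishing_first (k - 1)"
    if u: "u \<in> carrier_vec (k - 1)" for u
    unfolding Lmat_transpose_mult_vec[OF u] vanishing_first_def using u k by auto
  then show ?thesis unfolding red_domain_def col_space_Rmat_transpose by (auto simp: vanishing_first_def)
qed

lemma mat_eq_by_mult_vec:
  fixes A B :: "'a::field mat"
  assumes A: "A \<in> carrier_mat r c" and B: "B \<in> carrier_mat r c"
    and eq: "\<And>x. x \<in> carrier_vec c \<Longrightarrow> A *\<^sub>v x = B *\<^sub>v x"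
  shows "A = B"
proof (rule mat_col_eqI)
  fix j assume "j < dim_col B"
  then have j: "j < c" using B by simp
  have "col A j = A *\<^sub>v col (1\<^sub>m c) j" "col B j = B *\<^sub>v col (1\<^sub>m c) j"
    using col_mult2[OF A one_carrier_mat j] col_mult2[OF B one_carrier_mat j] A B by simp_all
  then show "col A j = col B j" using eq[of "unit_vec c j"] j by simp
qed (use A B in auto)

lemma jordan0_mult_Rmat_transpose:
  "(jordan0 k :: 'a::field mat) * (Rmat k)\<^sup>T = (Rmat k)\<^sup>T * jordan0 (k - 1)"
proof (rule mat_eq_by_mult_vec)
  show "(jordan0 k :: 'a mat) * (Rmat k)\<^sup>T \<in> carrier_mat k (k - 1)"
    using jordan0_carrier Rmat_transpose_carrier by (rule mult_carrier_mat)
  show "(Rmat k :: 'a mat)\<^sup>T * jordan0 (k - 1) \<in> carrier_mat k (k - 1)"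
    using Rmat_transpose_carrier jordan0_carrier by (rule mult_carrier_mat)
  fix x :: "'a vec" assume x: "x \<in> carrier_vec (k - 1)"
  have Rx: "(Rmat k)\<^sup>T *\<^sub>v x \<in> carrier_vec k" using mult_mat_vec_carrier[OF Rmat_transpose_carrier x] .
  have Jx: "jordan0 (k - 1) *\<^sub>v x \<in> carrier_vec (k - 1)" using mult_mat_vec_carrier[OF jordan0_carrier x] .
  have "(jordan0 k * (Rmat k)\<^sup>T) *\<^sub>v x = jordan0 k *\<^sub>v ((Rmat k)\<^sup>T *\<^sub>v x)"
    using assoc_mult_mat_vec[OF jordan0_carrier Rmat_transpose_carrier x] .
  also have "\<dots> = (Rmat k)\<^sup>T *\<^sub>v (jordan0 (k - 1) *\<^sub>v x)"
    unfolding jordan0_mult_vec[OF Rx] Rmat_transpose_mult_vec[OF Jx]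
    unfolding Rmat_transpose_mult_vec[OF x] jordan0_mult_vec[OF x] by (intro eq_vecI) auto
  also have "\<dots> = ((Rmat k)\<^sup>T * jordan0 (k - 1)) *\<^sub>v x"
    using assoc_mult_mat_vec[OF Rmat_transpose_carrier jordan0_carrier x] by simp
  finally show "(jordan0 k * (Rmat k)\<^sup>T) *\<^sub>v x = ((Rmat k)\<^sup>T * jordan0 (k - 1)) *\<^sub>v x" .
qed

lemma Lmat_transpose_mult_Rmat_transpose:
  "(Lmat k :: 'a::field mat)\<^sup>T * (Rmat (k - 1))\<^sup>T = (Rmat k)\<^sup>T * (Lmat (k - 1))\<^sup>T"
proof (rule mat_eq_by_mult_vec)
  show "(Lmat k :: 'a mat)\<^sup>T * (Rmat (k - 1))\<^sup>T \<in> carrier_mat k (k - 1 - 1)"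
    using Lmat_transpose_carrier Rmat_transpose_carrier by (rule mult_carrier_mat)
  show "(Rmat k :: 'a mat)\<^sup>T * (Lmat (k - 1))\<^sup>T \<in> carrier_mat k (k - 1 - 1)"
    using Rmat_transpose_carrier Lmat_transpose_carrier by (rule mult_carrier_mat)
  fix x :: "'a vec" assume x: "x \<in> carrier_vec (k - 1 - 1)"
  have Rx: "(Rmat (k - 1))\<^sup>T *\<^sub>v x \<in> carrier_vec (k - 1)"
    using mult_mat_vec_carrier[OF Rmat_transpose_carrier x] .
  have Lx: "(Lmat (k - 1))\<^sup>T *\<^sub>v x \<in> carrier_vec (k - 1)"
    using mult_mat_vec_carrier[OF Lmat_transpose_carrier x] .
  have "((Lmat k)\<^sup>T * (Rmat (k - 1))\<^sup>T) *\<^sub>v x = (Lmat k)\<^sup>T *\<^sub>v ((Rmat (k - 1))\<^sup>T *\<^sub>v x)"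
    using assoc_mult_mat_vec[OF Lmat_transpose_carrier Rmat_transpose_carrier x] .
  also have "\<dots> = (Rmat k)\<^sup>T *\<^sub>v ((Lmat (k - 1))\<^sup>T *\<^sub>v x)"
    unfolding Lmat_transpose_mult_vec[OF Rx] Rmat_transpose_mult_vec[OF Lx]
    unfolding Rmat_transpose_mult_vec[OF x] Lmat_transpose_mult_vec[OF x] by (intro eq_vecI) auto
  also have "\<dots> = ((Rmat k)\<^sup>T * (Lmat (k - 1))\<^sup>T) *\<^sub>v x"
    using assoc_mult_mat_vec[OF Rmat_transpose_carrier Lmat_transpose_carrier x] by simp
  finally show "((Lmat k)\<^sup>T * (Rmat (k - 1))\<^sup>T) *\<^sub>v x = ((Rmat k)\<^sup>T * (Lmat (k - 1))\<^sup>T) *\<^sub>v x" .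
qed

lemma is_reduction_one_jordan0:
  assumes "1 \<le> k"
  shows "is_reduction (1\<^sub>m k :: 'a::field mat, jordan0 k) (1\<^sub>m (k - 1), jordan0 (k - 1)) (k - 1) (k - 1) (k - 1 - 1)"
proof -
  have "is_reduction (1\<^sub>m k :: 'a mat, jordan0 k) (1\<^sub>m (k - 1), jordan0 (k - 1))
      (dim_col ((Rmat k :: 'a mat)\<^sup>T)) (dim_col ((Rmat k :: 'a mat)\<^sup>T)) (dim_col ((Rmat (k - 1) :: 'a mat)\<^sup>T))"
    by (rule is_reductionI)
      (use jordan0_carrier[of k] jordan0_carrier[of "k - 1"] Rmat_transpose_carrier[of k]
          basis_matrix_Rmat_transpose[of k] basis_matrix_Rmat_transpose[of "k - 1"] jordan0_mult_Rmat_transpose[of k]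
        in \<open>auto simp: red_domain_one_jordan0 col_space_jordan0\<close>)
  then show ?thesis by simp
qed

lemma is_reduction_Lmat_Rmat_transpose:
  assumes "1 \<le> k"
  shows "is_reduction ((Lmat k :: 'a::field mat)\<^sup>T, (Rmat k)\<^sup>T) ((Lmat (k - 1))\<^sup>T, (Rmat (k - 1))\<^sup>T)
    (k - 1 - 1) (k - 1) (k - 1 - 1)"
proof -
  have "is_reduction ((Lmat k :: 'a mat)\<^sup>T, (Rmat k)\<^sup>T) ((Lmat (k - 1))\<^sup>T, (Rmat (k - 1))\<^sup>T)
      (dim_col ((Rmat (k - 1) :: 'a mat)\<^sup>T)) (dim_col ((Rmat k :: 'a mat)\<^sup>T)) (dim_col ((Rmat (k - 1) :: 'a mat)\<^sup>T))"
    by (rule is_reductionI)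
      (use assms Rmat_transpose_carrier[of k] Rmat_transpose_carrier[of "k - 1"] Lmat_transpose_carrier[of "k - 1"]
          basis_matrix_Rmat_transpose[of k] basis_matrix_Rmat_transpose[of "k - 1"]
          Lmat_transpose_mult_Rmat_transpose[of k]
        in \<open>auto simp: red_domain_Lmat_Rmat_transpose col_space_Rmat_transpose\<close>)
  then show ?thesis by simp
qed

section \<open>Reducing a regularizing decomposition\<close>

text \<open>For \<open>k = 1\<close> this is a pair of \<open>0 \<times> 0\<close> matrices, which is why \<open>reduce_summand\<close> may delete
  the summand.\<close>

fun reduced_summand_pair :: "summand \<Rightarrow> 'a::field mat \<times> 'a mat" where
  "reduced_summand_pair (IJ k) = summand_pair (IJ (k - 1))"
| "reduced_summand_pair (LRT k) = summand_pair (LRT (k - 1))"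
| "reduced_summand_pair b = summand_pair b"

lemma is_reduction_summand_pair:
  assumes "1 \<le> summand_index b"
  obtains d e f where "is_reduction (summand_pair b :: 'a::field mat \<times> 'a mat) (reduced_summand_pair b) d e f"
    "(int (dim_row (fst (summand_pair b :: 'a mat \<times> 'a mat))) - int e)
       - (int (dim_col (fst (summand_pair b :: 'a mat \<times> 'a mat))) - int d) = of_bool (b = LRT 1)"
    "(int (dim_col (fst (summand_pair b :: 'a mat \<times> 'a mat))) - int d) - (int e - int f) = of_bool (b = IJ 1)"
proof (cases b)
  case (IJ k)
  then have k: "1 \<le> k" using assms by simp
  then obtain j where j: "k = Suc j" by (cases k) auto
  have "is_reduction (summand_pair b :: 'a mat \<times> 'a mat) (reduced_summand_pair b) (k - 1) (k - 1) (k - 1 - 1)"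
    using IJ is_reduction_one_jordan0[OF k] by simp
  moreover have "(int (dim_row (fst (summand_pair b :: 'a mat \<times> 'a mat))) - int (k - 1))
       - (int (dim_col (fst (summand_pair b :: 'a mat \<times> 'a mat))) - int (k - 1)) = of_bool (b = LRT 1)"
    "(int (dim_col (fst (summand_pair b :: 'a mat \<times> 'a mat))) - int (k - 1)) - (int (k - 1) - int (k - 1 - 1))
       = of_bool (b = IJ 1)"
    using IJ j by (cases j; simp)+
  ultimately show thesis by (rule that)
next
  case (JI k)
  have "is_reduction (summand_pair b :: 'a mat \<times> 'a mat) (reduced_summand_pair b) k k k"
    using JI is_reduction_surj[OF jordan0_carrier one_carrier_mat col_space_one] by simp
  then show thesis by (rule that) (simp_all add: JI)
next
  case (LR k)
  have "is_reduction (summand_pair b :: 'a mat \<times> 'a mat) (reduced_summand_pair b) k (k - 1) (k - 1)"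
    using LR is_reduction_surj[OF Lmat_carrier Rmat_carrier col_space_Rmat] by simp
  then show thesis by (rule that) (simp_all add: LR)
next
  case (LRT k)
  then have k: "1 \<le> k" using assms by simp
  then obtain j where j: "k = Suc j" by (cases k) auto
  have "is_reduction (summand_pair b :: 'a mat \<times> 'a mat) (reduced_summand_pair b) (k - 1 - 1) (k - 1) (k - 1 - 1)"
    using LRT is_reduction_Lmat_Rmat_transpose[OF k] by simp
  moreover have "(int (dim_row (fst (summand_pair b :: 'a mat \<times> 'a mat))) - int (k - 1))
       - (int (dim_col (fst (summand_pair b :: 'a mat \<times> 'a mat))) - int (k - 1 - 1)) = of_bool (b = LRT 1)"
    "(int (dim_col (fst (summand_pair b :: 'a mat \<times> 'a mat))) - int (k - 1 - 1)) - (int (k - 1) - int (k - 1 - 1))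
       = of_bool (b = IJ 1)"
    using LRT j by (cases j; simp)+
  ultimately show thesis by (rule that)
qed

lemma foldl_reduce_summand:
  "foldl (\<lambda>P b. dsum_pair P (summand_pair b)) X (reduce_summand b) = dsum_pair X (reduced_summand_pair b)"
proof -
  have "dsum_pair X (1\<^sub>m 0, jordan0 0) = X" "dsum_pair X ((Lmat 0)\<^sup>T, (Rmat 0)\<^sup>T) = X"
    unfolding dsum_pair_def by (simp_all add: dsum_mat_empty)
  then show ?thesis by (cases b) auto
qed

lemma decomp_pair_reduction:
  fixes D :: "'a::field mat"
  assumes D: "D \<in> carrier_mat r r" "invertible_mat D" and idx: "\<forall>b \<in> set bs. 1 \<le> summand_index b"
  shows "\<exists>d e f. is_reduction (decomp_pair r D bs) (decomp_pair r D (reduce_summands bs)) d e f \<and>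
    int (count_list bs (LRT 1))
      = (int (dim_row (fst (decomp_pair r D bs))) - int e) - (int (dim_col (fst (decomp_pair r D bs))) - int d) \<and>
    int (count_list bs (IJ 1)) = (int (dim_col (fst (decomp_pair r D bs))) - int d) - (int e - int f)"
  using idx
proof (induction bs rule: rev_induct)
  case Nil
  show ?case
    using is_reduction_surj[OF one_carrier_mat D(1) col_space_invertible[OF D]]
    by (intro exI[of _ r]) (simp add: decomp_pair_def reduce_summands_def)
next
  case (snoc b bs)
  obtain d e f where IH: "is_reduction (decomp_pair r D bs) (decomp_pair r D (reduce_summands bs)) d e f"
    "int (count_list bs (LRT 1))
      = (int (dim_row (fst (decomp_pair r D bs))) - int e) - (int (dim_col (fst (decomp_pair r D bs))) - int d)"
    "int (count_list bs (IJ 1)) = (int (dim_col (fst (decomp_pair r D bs))) - int d) - (int e - int f)"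
    using snoc by auto
  obtain d' e' f' where b: "is_reduction (summand_pair b :: 'a mat \<times> 'a mat) (reduced_summand_pair b) d' e' f'"
    "(int (dim_row (fst (summand_pair b :: 'a mat \<times> 'a mat))) - int e')
       - (int (dim_col (fst (summand_pair b :: 'a mat \<times> 'a mat))) - int d') = of_bool (b = LRT 1)"
    "(int (dim_col (fst (summand_pair b :: 'a mat \<times> 'a mat))) - int d') - (int e' - int f') = of_bool (b = IJ 1)"
    using is_reduction_summand_pair[of b] snoc.prems by auto
  have decomp: "decomp_pair r D (bs @ [b]) = dsum_pair (decomp_pair r D bs) (summand_pair b)"
    "decomp_pair r D (reduce_summands (bs @ [b])) = dsum_pair (decomp_pair r D (reduce_summands bs)) (reduced_summand_pair b)"
    unfolding decomp_pair_def reduce_summands_def by (simp_all add: foldl_reduce_summand)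
  have dims: "dim_row (fst (decomp_pair r D (bs @ [b])))
      = dim_row (fst (decomp_pair r D bs)) + dim_row (fst (summand_pair b :: 'a mat \<times> 'a mat))"
    "dim_col (fst (decomp_pair r D (bs @ [b])))
      = dim_col (fst (decomp_pair r D bs)) + dim_col (fst (summand_pair b :: 'a mat \<times> 'a mat))"
    unfolding decomp(1) dsum_pair_def by simp_all
  have count: "int (count_list (bs @ [b]) x) = int (count_list bs x) + of_bool (b = x)" for x
    by (cases "b = x") simp_all
  show ?case
  proof (intro exI conjI)
    show "is_reduction (decomp_pair r D (bs @ [b])) (decomp_pair r D (reduce_summands (bs @ [b])))
        (d + d') (e + e') (f + f')"
      unfolding decomp by (rule is_reduction_dsum_pair[OF IH(1) b(1)])
    show "int (count_list (bs @ [b]) (LRT 1)) = (int (dim_row (fst (decomp_pair r D (bs @ [b])))) - int (e + e'))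
        - (int (dim_col (fst (decomp_pair r D (bs @ [b])))) - int (d + d'))"
      using IH(2) b(2) count[of "LRT 1"] unfolding dims of_nat_add by linarith
    show "int (count_list (bs @ [b]) (IJ 1))
        = (int (dim_col (fst (decomp_pair r D (bs @ [b])))) - int (d + d')) - (int (e + e') - int (f + f'))"
      using IH(3) b(3) count[of "IJ 1"] unfolding dims of_nat_add by linarith
  qed
qed

lemma reduce_summands_index:
  assumes "\<forall>b \<in> set bs. 1 \<le> summand_index b"
  shows "\<forall>b \<in> set (reduce_summands bs). 1 \<le> summand_index b"
proof
  have index: "1 \<le> summand_index b'" if "b' \<in> set (reduce_summand b)" "1 \<le> summand_index b" for b b'
    using that by (cases b) (auto split: if_splits)
  fix b' assume "b' \<in> set (reduce_summands bs)"
  then obtain b where "b \<in> set bs" "b' \<in> set (reduce_summand b)" unfolding reduce_summands_def by auto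
  then show "1 \<le> summand_index b'" using assms index by blast
qed

theorem lemma1:
  fixes MA MB :: "'a::field mat" and n m :: nat
    and P1 Q1 A1 B1 P2 Q2 Q3 A2 B2 :: "'a mat"
    and r :: nat and D :: "'a mat" and bs :: "summand list"
  defines "V2 \<equiv> (\<lambda>u. MB *\<^sub>v u) ` carrier_vec n"
  defines "U2 \<equiv> {u \<in> carrier_vec n. MA *\<^sub>v u \<in> V2}"
  defines "V3 \<equiv> (\<lambda>u. MB *\<^sub>v u) ` U2"
  assumes MA: "MA \<in> carrier_mat m n" and MB: "MB \<in> carrier_mat m n"
  assumes P1: "P1 \<in> carrier_mat n n" "invertible_mat P1"
    and Q1: "Q1 \<in> carrier_mat m m" "invertible_mat Q1"
    and A1: "A1 \<in> carrier_mat m n" "MA * P1 = Q1 * A1"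
    and B1: "B1 \<in> carrier_mat m n" "MB * P1 = Q1 * B1"
  assumes P2: "basis_matrix n U2 P2"
    and Q2: "basis_matrix m V2 Q2"
    and A2: "A2 \<in> carrier_mat (dim_col Q2) (dim_col P2)" "MA * P2 = Q2 * A2"
    and B2: "B2 \<in> carrier_mat (dim_col Q2) (dim_col P2)" "MB * P2 = Q2 * B2"
  assumes Q3: "basis_matrix m V3 Q3"
  assumes dec: "regularizing_decomp (A1, B1) r D bs"
  shows "regularizing_decomp (A2, B2) r D (reduce_summands bs)
    \<and> int (count_list bs (LRT 1)) = (int m - int (dim_col Q2)) - (int n - int (dim_col P2))
    \<and> int (count_list bs (IJ 1)) = (int n - int (dim_col P2)) - (int (dim_col Q2) - int (dim_col Q3))"
proof -
  obtain DA DB where DAB: "decomp_pair r D bs = (DA, DB)" by fastforce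
  obtain DA2 DB2 where DAB2: "decomp_pair r D (reduce_summands bs) = (DA2, DB2)" by fastforce
  have D: "D \<in> carrier_mat r r" "invertible_mat D" and idx: "\<forall>b \<in> set bs. 1 \<le> summand_index b"
    and equiv1: "pair_equiv (A1, B1) (DA, DB)"
    using dec unfolding regularizing_decomp_def DAB by auto
  have DA: "DA \<in> carrier_mat m n" using equiv1 A1(1) by (auto elim: pair_equivE)
  have "pair_equiv (A1, B1) (MA, MB)"
    using pair_equivI[OF A1(1) B1(1) MA MB Q1(1,2) P1(1,2)] A1(2) B1(2) by simp
  then have equiv: "pair_equiv (DA, DB) (MA, MB)"
    using pair_equiv_trans[OF pair_equiv_sym[OF equiv1 A1(1)] _ DA] by blast
  have spaces: "V2 = col_space MB" "U2 = red_domain MA MB" "V3 = red_image MA MB"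
    unfolding V2_def U2_def V3_def col_space_def red_domain_def red_image_def using MB by auto
  have "is_reduction (MA, MB) (A2, B2) (dim_col P2) (dim_col Q2) (dim_col Q3)"
    unfolding is_reduction.simps using MA MB A2 B2 P2 Q2 Q3 unfolding spaces
    by (intro conjI exI[of _ P2] exI[of _ Q2] exI[of _ Q3]) auto
  moreover obtain d e f where red: "is_reduction (DA, DB) (DA2, DB2) d e f"
    and counts: "int (count_list bs (LRT 1)) = (int (dim_row DA) - int e) - (int (dim_col DA) - int d)"
      "int (count_list bs (IJ 1)) = (int (dim_col DA) - int d) - (int e - int f)"
    using decomp_pair_reduction[OF D idx] unfolding DAB DAB2 fst_conv by blast
  ultimately have "dim_col P2 = d \<and> dim_col Q2 = e \<and> dim_col Q3 = f \<and> pair_equiv (A2, B2) (DA2, DB2)"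
    using is_reduction_pair_equiv[OF equiv DA red] by blast
  then show ?thesis
    unfolding regularizing_decomp_def DAB2 using D reduce_summands_index[OF idx] counts DA by auto
qed

end
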